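(* $\mathrm{UF}_1^=$ has the finite model property. Moreover, there is a fixed polynomial $p$ such that every satisfiable $\mathrm{UF}_1^=$-formula $\phi$ has a finite model whose domain has size at most $2^{p(|\phi|)}$ (i.e., bounded exponentially in $|\phi|$).
   Context: Vocabularies are relational (relation symbols of positive finite arities, no constants or function symbols). A $k$-ary $\tau$-atom is an atomic formula (a relational atom $R(z_1,\dots,z_m)$ with $R\in\tau$, or an equality $z=z'$) having exactly $k$ distinct free variables. For a finite set $V$ of variables, a $V$-uniform set is a finite set of relational (non-equality) $\tau$-atoms $R(z_1,\dots,z_m)$ with $\{z_1,\dots,z_m\}=V$. The set $\mathrm{UF}_1^=(\tau)$ is the smallest set $\mathcal F$ such that: (1) every unary $\tau$-atom, and $\bot,\top$, are in $\mathcal F$; (2) every equality $x=y$ is in $\mathcal F$; (3) $\mathcal F$ is closed under $\neg$ and $\wedge$; (4) if $X=\{x_0,\dots,x_k\}$ is a finite set of variables, $U$ a finite set of formulas of $\mathcal F$ with free variables in $X$, $V\subseteq X$, $F$ a $V$-uniform set of $\tau$-atoms, and $\varphi$ a Boolean combination of formulas in $U\cup F$, then $\exists x_1\dots\exists x_k\,\varphi\in\mathcal F$ and $\exists x_0\dots\exists x_k\,\varphi\in\mathcal F$. $\mathrm{UF}_1^=$ is the union of $\mathrm{UF}_1^=(\tau)$ over all vocabularies; $\forall$ and other connectives are abbreviations. A logic has the finite model property if every satisfiable formula has a finite model. *)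

theory Defs
  imports "HOL-Computational_Algebra.Polynomial"
begin

text \<open>A vocabulary is given by an arity function ar; a relational atom
  Rel R zs is well-formed iff length zs = ar R and ar R > 0.
  Only the primitive connectives (negation, conjunction, existential
  quantification) are included; all others are abbreviations.\<close>

datatype fm =
    Bot
  | Top
  | Rel nat "nat list"
  | Eq nat nat
  | Neg fm
  | Conj fm fm
  | Ex nat fm

fun fv :: "fm \<Rightarrow> nat set" where
  "fv Bot = {}"
| "fv Top = {}"
| "fv (Rel R zs) = set zs"
| "fv (Eq x y) = {x, y}"
| "fv (Neg \<phi>) = fv \<phi>"
| "fv (Conj \<phi> \<psi>) = fv \<phi> \<union> fv \<psi>"
| "fv (Ex x \<phi>) = fv \<phi> - {x}"

text \<open>Length of a formula: number of symbol occurrences.\<close>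
fun fsize :: "fm \<Rightarrow> nat" where
  "fsize Bot = 1"
| "fsize Top = 1"
| "fsize (Rel R zs) = 1 + length zs"
| "fsize (Eq x y) = 3"
| "fsize (Neg \<phi>) = 1 + fsize \<phi>"
| "fsize (Conj \<phi> \<psi>) = 1 + fsize \<phi> + fsize \<psi>"
| "fsize (Ex x \<phi>) = 2 + fsize \<phi>"

fun sat :: "'a set \<Rightarrow> (nat \<Rightarrow> 'a list \<Rightarrow> bool) \<Rightarrow> (nat \<Rightarrow> 'a) \<Rightarrow> fm \<Rightarrow> bool" where
  "sat D I \<sigma> Bot = False"
| "sat D I \<sigma> Top = True"
| "sat D I \<sigma> (Rel R zs) = I R (map \<sigma> zs)"
| "sat D I \<sigma> (Eq x y) = (\<sigma> x = \<sigma> y)"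
| "sat D I \<sigma> (Neg \<phi>) = (\<not> sat D I \<sigma> \<phi>)"
| "sat D I \<sigma> (Conj \<phi> \<psi>) = (sat D I \<sigma> \<phi> \<and> sat D I \<sigma> \<psi>)"
| "sat D I \<sigma> (Ex x \<phi>) = (\<exists>d\<in>D. sat D I (\<sigma>(x := d)) \<phi>)"

definition is_model :: "'a set \<Rightarrow> (nat \<Rightarrow> 'a list \<Rightarrow> bool) \<Rightarrow> (nat \<Rightarrow> 'a) \<Rightarrow> fm \<Rightarrow> bool" where
  "is_model D I \<sigma> \<phi> \<longleftrightarrow> D \<noteq> {} \<and> (\<forall>x. \<sigma> x \<in> D) \<and> sat D I \<sigma> \<phi>"

definition rel_atom :: "(nat \<Rightarrow> nat) \<Rightarrow> fm \<Rightarrow> bool" where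
  "rel_atom ar \<phi> \<longleftrightarrow> (\<exists>R zs. \<phi> = Rel R zs \<and> length zs = ar R \<and> 0 < ar R)"

definition uniform_set :: "(nat \<Rightarrow> nat) \<Rightarrow> nat set \<Rightarrow> fm set \<Rightarrow> bool" where
  "uniform_set ar V F \<longleftrightarrow> finite F \<and> (\<forall>\<phi>\<in>F. rel_atom ar \<phi> \<and> fv \<phi> = V)"

inductive bool_comb :: "fm set \<Rightarrow> fm \<Rightarrow> bool" for S where
  bc_base: "\<phi> \<in> S \<Longrightarrow> bool_comb S \<phi>"
| bc_neg: "bool_comb S \<phi> \<Longrightarrow> bool_comb S (Neg \<phi>)"
| bc_conj: "bool_comb S \<phi> \<Longrightarrow> bool_comb S \<psi> \<Longrightarrow> bool_comb S (Conj \<phi> \<psi>)"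

fun Exs :: "nat list \<Rightarrow> fm \<Rightarrow> fm" where
  "Exs [] \<phi> = \<phi>"
| "Exs (x # xs) \<phi> = Ex x (Exs xs \<phi>)"

inductive uf1 :: "(nat \<Rightarrow> nat) \<Rightarrow> fm \<Rightarrow> bool" for ar where
  uf_unary_rel: "rel_atom ar \<phi> \<Longrightarrow> card (fv \<phi>) = 1 \<Longrightarrow> uf1 ar \<phi>"
| uf_bot: "uf1 ar Bot"
| uf_top: "uf1 ar Top"
| uf_eq: "uf1 ar (Eq x y)"
| uf_neg: "uf1 ar \<phi> \<Longrightarrow> uf1 ar (Neg \<phi>)"
| uf_conj: "uf1 ar \<phi> \<Longrightarrow> uf1 ar \<psi> \<Longrightarrow> uf1 ar (Conj \<phi> \<psi>)"
| uf_ex: "\<lbrakk> xs \<noteq> []; distinct xs; finite U;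
            \<forall>\<psi>\<in>U. uf1 ar \<psi> \<and> fv \<psi> \<subseteq> set xs;
            V \<subseteq> set xs; uniform_set ar V F;
            bool_comb (U \<union> F) \<phi> \<rbrakk>
          \<Longrightarrow> uf1 ar (Exs (tl xs) \<phi>)"
| uf_ex_all: "\<lbrakk> xs \<noteq> []; distinct xs; finite U;
            \<forall>\<psi>\<in>U. uf1 ar \<psi> \<and> fv \<psi> \<subseteq> set xs;
            V \<subseteq> set xs; uniform_set ar V F;
            bool_comb (U \<union> F) \<phi> \<rbrakk>
          \<Longrightarrow> uf1 ar (Exs xs \<phi>)"

end

theory Submission
  imports Defs
begin

text \<open>
  Fix a model (D, I) of \<phi>. The type of an element b collects the formulas of a fixed finite set
  that hold when every variable denotes b: the subformulas of \<phi> and, for every existential block,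
  a variant asking for a witness in which the centre differs from the arguments of the block's
  relational atoms. The small model keeps the elements of rare types (fewer realizations than
  there are variables) and realizes every other type by boundedly many labelled copies, so its
  size is exponential in |\<phi>|. A relational atom on a tuple of the small model is evaluated in D
  at the image of the tuple under a pullback, an injective type-preserving map into D that, on
  tuples arising from a witness of a block, returns that witness.

  Induction over UF1 then shows that satisfaction depends only on the types and the equality
  pattern of an assignment. For a block, a witness in D is copied into the small model; conversely
  a witness in the small model is mapped back into D by extending the pullback of its atom tuple
  injectively and type-preservingly to all variables of the block, which is possible because
  non-rare types have enough realizations.
\<close>

fun subformulas :: "fm \<Rightarrow> fm set" where
  "subformulas Bot = {Bot}"
| "subformulas Top = {Top}"
| "subformulas (Rel R zs) = {Rel R zs}"
| "subformulas (Eq x y) = {Eq x y}"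
| "subformulas (Neg \<phi>) = insert (Neg \<phi>) (subformulas \<phi>)"
| "subformulas (Conj \<phi> \<psi>) = insert (Conj \<phi> \<psi>) (subformulas \<phi> \<union> subformulas \<psi>)"
| "subformulas (Ex x \<phi>) = insert (Ex x \<phi>) (subformulas \<phi>)"

fun vars :: "fm \<Rightarrow> nat set" where
  "vars Bot = {}"
| "vars Top = {}"
| "vars (Rel R zs) = set zs"
| "vars (Eq x y) = {x, y}"
| "vars (Neg \<phi>) = vars \<phi>"
| "vars (Conj \<phi> \<psi>) = vars \<phi> \<union> vars \<psi>"
| "vars (Ex x \<phi>) = insert x (vars \<phi>)"

lemma subformulas_self [simp]: "\<phi> \<in> subformulas \<phi>"
  by (cases \<phi>) auto

lemma finite_subformulas [simp]: "finite (subformulas \<phi>)"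
  by (induction \<phi>) auto

lemma finite_vars [simp]: "finite (vars \<phi>)"
  by (induction \<phi>) auto

lemma card_subformulas_le: "card (subformulas \<phi>) \<le> fsize \<phi>"
proof (induction \<phi>)
  case (Conj \<phi>1 \<phi>2)
  have "card (subformulas (Conj \<phi>1 \<phi>2)) \<le> Suc (card (subformulas \<phi>1 \<union> subformulas \<phi>2))"
    by (simp add: card_insert_if)
  also have "\<dots> \<le> Suc (card (subformulas \<phi>1) + card (subformulas \<phi>2))"
    using card_Un_le by (metis Suc_le_mono)
  finally show ?case using Conj by simp
qed (auto simp: card_insert_if)

lemma card_vars_le: "card (vars \<phi>) \<le> fsize \<phi>"
proof (induction \<phi>)
  case (Rel R zs) then show ?case using card_length[of zs] by simp
next
  case (Conj \<phi>1 \<phi>2)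
  then show ?case using card_Un_le[of "vars \<phi>1" "vars \<phi>2"] by simp
qed (auto simp: card_insert_if)

lemma subformulas_trans: "\<psi> \<in> subformulas \<phi> \<Longrightarrow> subformulas \<psi> \<subseteq> subformulas \<phi>"
  by (induction \<phi>) auto

lemma vars_subformula: "\<psi> \<in> subformulas \<phi> \<Longrightarrow> vars \<psi> \<subseteq> vars \<phi>"
  by (induction \<phi>) auto

lemma fv_subset_vars: "fv \<phi> \<subseteq> vars \<phi>"
  by (induction \<phi>) auto

lemma Neg_subformula: "Neg \<psi> \<in> subformulas \<phi> \<Longrightarrow> \<psi> \<in> subformulas \<phi>"
  using subformulas_trans[of "Neg \<psi>" \<phi>] by auto

lemma Conj_subformula: "Conj \<psi> \<psi>' \<in> subformulas \<phi> \<Longrightarrow> \<psi> \<in> subformulas \<phi> \<and> \<psi>' \<in> subformulas \<phi>"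
  using subformulas_trans[of "Conj \<psi> \<psi>'" \<phi>] by auto

lemma Exs_subformula: "Exs ys \<chi> \<in> subformulas \<phi> \<Longrightarrow> \<chi> \<in> subformulas \<phi> \<and> set ys \<subseteq> vars \<phi>"
proof (induction ys)
  case (Cons y ys)
  have "Exs ys \<chi> \<in> subformulas \<phi>" "y \<in> vars \<phi>"
    using subformulas_trans[OF Cons.prems] vars_subformula[OF Cons.prems] by auto
  then show ?case using Cons.IH by simp
qed simp

lemma fv_Exs [simp]: "fv (Exs ys \<chi>) = fv \<chi> - set ys"
  by (induction ys) auto

lemma fsize_Exs: "fsize (Exs ys \<chi>) = 2 * length ys + fsize \<chi>"
  by (induction ys) auto

lemma Exs_inject: "Exs ys \<chi> = Exs ys' \<chi> \<Longrightarrow> ys = ys'"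
proof (induction ys arbitrary: ys')
  case Nil
  then show ?case using fsize_Exs[of ys' \<chi>] by (cases ys') auto
next
  case (Cons y ys)
  then show ?case using fsize_Exs[of "y # ys" \<chi>] by (cases ys') auto
qed

lemma fv_bool_comb: "bool_comb S \<chi> \<Longrightarrow> fv \<chi> \<subseteq> \<Union> (fv ` S)"
  by (induction rule: bool_comb.induct) auto

lemma sat_cong_fv: "\<forall>x\<in>fv \<psi>. \<sigma> x = \<sigma>' x \<Longrightarrow> sat D I \<sigma> \<psi> \<longleftrightarrow> sat D I \<sigma>' \<psi>"
proof (induction \<psi> arbitrary: \<sigma> \<sigma>')
  case (Rel R zs) then show ?case by (simp cong: map_cong)
next
  case (Ex x \<psi>)
  have "sat D I (\<sigma>(x := d)) \<psi> \<longleftrightarrow> sat D I (\<sigma>'(x := d)) \<psi>" for d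
    using Ex by (intro Ex.IH) auto
  then show ?case by simp
next
  case (Conj \<psi>1 \<psi>2)
  have "sat D I \<sigma> \<psi>1 \<longleftrightarrow> sat D I \<sigma>' \<psi>1" by (rule Conj.IH(1)) (use Conj.prems in simp)
  moreover have "sat D I \<sigma> \<psi>2 \<longleftrightarrow> sat D I \<sigma>' \<psi>2" by (rule Conj.IH(2)) (use Conj.prems in simp)
  ultimately show ?case by simp
qed auto

lemma sat_Exs:
  "sat D I \<sigma> (Exs ys \<chi>) \<longleftrightarrow>
     (\<exists>w. (\<forall>v. v \<notin> set ys \<longrightarrow> w v = \<sigma> v) \<and> (\<forall>v\<in>set ys. w v \<in> D) \<and> sat D I w \<chi>)"
proof (induction ys arbitrary: \<sigma>)
  case Nil
  have "(\<forall>v. w v = \<sigma> v) \<longleftrightarrow> w = \<sigma>" for w :: "nat \<Rightarrow> 'a" by auto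
  then show ?case by simp
next
  case (Cons y ys)
  show ?case
  proof
    assume "sat D I \<sigma> (Exs (y # ys) \<chi>)"
    then obtain d w where "d \<in> D" "\<forall>v. v \<notin> set ys \<longrightarrow> w v = (\<sigma>(y := d)) v"
      "\<forall>v\<in>set ys. w v \<in> D" "sat D I w \<chi>"
      using Cons.IH by auto
    then show "\<exists>w. (\<forall>v. v \<notin> set (y # ys) \<longrightarrow> w v = \<sigma> v) \<and> (\<forall>v\<in>set (y # ys). w v \<in> D) \<and> sat D I w \<chi>"
      by (intro exI[of _ w]) auto
  next
    assume "\<exists>w. (\<forall>v. v \<notin> set (y # ys) \<longrightarrow> w v = \<sigma> v) \<and> (\<forall>v\<in>set (y # ys). w v \<in> D) \<and> sat D I w \<chi>"
    then obtain w where w: "\<forall>v. v \<notin> set (y # ys) \<longrightarrow> w v = \<sigma> v" "\<forall>v\<in>set (y # ys). w v \<in> D"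
      "sat D I w \<chi>"
      by blast
    have "\<forall>v. v \<notin> set ys \<longrightarrow> w v = (\<sigma>(y := w y)) v" using w(1) by auto
    then have "sat D I (\<sigma>(y := w y)) (Exs ys \<chi>)"
      unfolding Cons.IH using w(2,3) by (intro exI[of _ w]) auto
    then show "sat D I \<sigma> (Exs (y # ys) \<chi>)" using w(2) by auto
  qed
qed

lemma bool_comb_sat_cong:
  assumes "bool_comb S \<chi>"
    and "\<And>\<theta>. \<theta> \<in> S \<Longrightarrow> \<theta> \<in> subformulas \<chi> \<Longrightarrow> fv \<theta> \<subseteq> fv \<chi> \<Longrightarrow>
      sat D I \<sigma> \<theta> \<longleftrightarrow> sat D' I' \<sigma>' \<theta>"
  shows "sat D I \<sigma> \<chi> \<longleftrightarrow> sat D' I' \<sigma>' \<chi>"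
proof -
  have "sat D I \<sigma> \<chi>' \<longleftrightarrow> sat D' I' \<sigma>' \<chi>'"
    if "bool_comb S \<chi>'" "\<chi>' \<in> subformulas \<chi>" "fv \<chi>' \<subseteq> fv \<chi>" for \<chi>'
    using that
  proof (induction rule: bool_comb.induct)
    case (bc_base \<theta>) then show ?case using assms(2) by blast
  next
    case (bc_neg \<theta>)
    then have "\<theta> \<in> subformulas \<chi>" using Neg_subformula by blast
    with bc_neg show ?case by simp
  next
    case (bc_conj \<theta> \<theta>')
    then have "\<theta> \<in> subformulas \<chi>" "\<theta>' \<in> subformulas \<chi>" using Conj_subformula by blast+
    with bc_conj show ?case by simp
  qed
  then show ?thesis using assms(1) by simp
qed

lemma sat_bij_betw:
  assumes g: "bij_betw g D' D" and \<sigma>: "\<forall>x. \<sigma> x \<in> D'"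
  shows "sat D' (\<lambda>R ds. I R (map g ds)) \<sigma> \<psi> \<longleftrightarrow> sat D I (g \<circ> \<sigma>) \<psi>"
  using \<sigma>
proof (induction \<psi> arbitrary: \<sigma>)
  case (Eq x y)
  then show ?case using bij_betw_imp_inj_on[OF g] by (simp add: inj_on_eq_iff)
next
  case (Ex x \<psi>)
  have "sat D' (\<lambda>R ds. I R (map g ds)) (\<sigma>(x := d)) \<psi> \<longleftrightarrow> sat D I (g \<circ> \<sigma>(x := d)) \<psi>"
    if "d \<in> D'" for d
    using Ex.prems that by (intro Ex.IH) simp
  moreover have "D = g ` D'" using bij_betw_imp_surj_on[OF g] by simp
  ultimately show ?case by (simp only: sat.simps fun_upd_comp) blast
qed (simp_all add: comp_def)

section \<open>Requests and the small domain\<close>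

text \<open>A request (x, ys, \<chi>, V) asks for a witness of the block \<exists>ys. \<chi> at the value of x;
  V is the common variable set of the relational atoms of \<chi> that matter, or {}.\<close>

type_synonym request = "nat \<times> nat list \<times> fm \<times> nat set"

definition req_var :: "request \<Rightarrow> nat" where "req_var q = fst q"
definition req_block :: "request \<Rightarrow> nat list" where "req_block q = fst (snd q)"
definition req_body :: "request \<Rightarrow> fm" where "req_body q = fst (snd (snd q))"
definition req_atoms :: "request \<Rightarrow> nat set" where "req_atoms q = snd (snd (snd q))"

lemma request_simps [simp]:
  "req_var (x, ys, \<chi>, V) = x" "req_block (x, ys, \<chi>, V) = ys"
  "req_body (x, ys, \<chi>, V) = \<chi>" "req_atoms (x, ys, \<chi>, V) = V"
  unfolding req_var_def req_block_def req_body_def req_atoms_def by simp_all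

definition Neq_all :: "nat \<Rightarrow> nat list \<Rightarrow> fm" where
  "Neq_all x vs = foldr (\<lambda>v \<psi>. Conj (Neg (Eq x v)) \<psi>) vs Top"

lemma sat_Neq_all: "sat D I w (Neq_all x vs) \<longleftrightarrow> (\<forall>v\<in>set vs. w x \<noteq> w v)"
  unfolding Neq_all_def by (induction vs) auto

definition sep_fm :: "request \<Rightarrow> fm" where
  "sep_fm q = Exs (req_block q)
     (Conj (req_body q) (Neq_all (req_var q) (sorted_list_of_set (req_atoms q))))"

definition request_code :: "request \<Rightarrow> nat \<times> fm \<times> fm \<times> nat set" where
  "request_code q = (req_var q, Exs (req_block q) (req_body q), req_body q, req_atoms q)"

lemma inj_request_code: "inj request_code"
proof (rule injI)
  fix q q' assume "request_code q = request_code q'"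
  then show "q = q'"
    using Exs_inject[of "req_block q" "req_body q" "req_block q'"]
    by (cases q, cases q') (auto simp: request_code_def)
qed

text \<open>A copy Owned q v stands for the v-th
  witness of request q at a centre that is itself among the values of the atom variables,
  Sep \<tau> q v for the v-th witness at a centre of type \<tau> that avoids them, and From_rare a q v
  for the v-th witness at the rare element a; Plain v realizes the type once more.\<close>

datatype 'a label =
    Owned request (label_var: nat)
  | Sep "fm set" request (label_var: nat)
  | From_rare 'a request (label_var: nat)
  | Plain (label_var: nat)

text \<open>An element of the small model is a rare element of D or a triple (type, layer, label).\<close>

type_synonym 'a elem = "'a + fm set \<times> nat \<times> 'a label"

locale small_model =
  fixes D :: "'a set" and I :: "nat \<Rightarrow> 'a list \<Rightarrow> bool" and \<phi> :: fm
  assumes D_nonempty: "D \<noteq> {}"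
begin

definition "fresh_var = Suc (Max (insert 0 (vars \<phi>)))"

definition "var_set = insert fresh_var (vars \<phi>)"

definition "atom_sets = insert {} {set zs | R zs. Rel R zs \<in> subformulas \<phi>}"

definition "requests = {q. Exs (req_block q) (req_body q) \<in> subformulas \<phi> \<and>
  req_var q \<in> var_set \<and> req_var q \<notin> set (req_block q) \<and> req_atoms q \<in> atom_sets}"

definition "type_fms = subformulas \<phi> \<union> sep_fm ` requests"

definition "type_of b = {\<theta> \<in> type_fms. sat D I (\<lambda>_. b) \<theta>}"

definition "Types = type_of ` D"

definition "realizers \<tau> = {d \<in> D. type_of d = \<tau>}"

definition "width = card var_set"

definition "rare \<tau> \<longleftrightarrow> finite (realizers \<tau>) \<and> card (realizers \<tau>) < width"

definition "rare_elems = {d \<in> D. rare (type_of d)}"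

definition "labels =
  (\<lambda>(q, v). Owned q v) ` (requests \<times> var_set) \<union>
  (\<lambda>(\<tau>, q, v). Sep \<tau> q v) ` (Types \<times> requests \<times> var_set) \<union>
  (\<lambda>(a, q, v). From_rare a q v) ` (rare_elems \<times> requests \<times> var_set) \<union>
  Plain ` var_set"

definition small_dom :: "'a elem set" where
  "small_dom = Inl ` rare_elems \<union>
     Inr ` {(\<tau>, j, i). \<tau> \<in> Types \<and> \<not> rare \<tau> \<and> j < 3 \<and> i \<in> labels}"

definition small_type :: "'a elem \<Rightarrow> fm set" where
  "small_type c = (case c of Inl d \<Rightarrow> type_of d | Inr (\<tau>, _, _) \<Rightarrow> \<tau>)"

definition layer :: "'a elem \<Rightarrow> nat option" where
  "layer c = (case c of Inl _ \<Rightarrow> None | Inr (_, j, _) \<Rightarrow> Some j)"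

definition "rep \<tau> = (SOME d. d \<in> D \<and> type_of d = \<tau>)"

definition "is_witness b q w \<longleftrightarrow>
  (\<forall>v. v \<notin> set (req_block q) \<longrightarrow> w v = b) \<and> (\<forall>v. w v \<in> D) \<and> sat D I w (req_body q)"

definition "witness b q = (SOME w. is_witness b q w)"

definition "sep_witness \<tau> q = (SOME w. is_witness (rep \<tau>) q w \<and> w (req_var q) \<notin> w ` req_atoms q)"

text \<open>Sep and From_rare labels determine the witness they stand for, so proj can return it.\<close>

definition proj :: "'a elem \<Rightarrow> 'a" where
  "proj c = (case c of
     Inl d \<Rightarrow> d
   | Inr (\<tau>', j, i) \<Rightarrow> (case i of
       Sep \<tau> q v \<Rightarrow>
         (if sep_witness \<tau> q v \<in> D \<and> type_of (sep_witness \<tau> q v) = \<tau>' then sep_witness \<tau> q v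
          else rep \<tau>')
     | From_rare a q v \<Rightarrow>
         (if witness a q v \<in> D \<and> type_of (witness a q v) = \<tau>' then witness a q v else rep \<tau>')
     | _ \<Rightarrow> rep \<tau>'))"

definition req_witness :: "'a elem \<Rightarrow> request \<Rightarrow> nat \<Rightarrow> 'a" where
  "req_witness c0 q = (case c0 of
     Inl a \<Rightarrow> witness a q
   | Inr (\<tau>, j, i) \<Rightarrow> (if sep_fm q \<in> \<tau> then sep_witness \<tau> q else witness (proj c0) q))"

text \<open>Witness copies are placed one layer above their centre (mod 3), so that a set
  containing a centre and its copies determines the centre (owner_unique).\<close>

definition fresh_copy :: "'a elem \<Rightarrow> request \<Rightarrow> fm set \<Rightarrow> nat \<Rightarrow> 'a elem" where
  "fresh_copy c0 q \<tau>' v = (case c0 of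
     Inl a \<Rightarrow> Inr (\<tau>', 0, From_rare a q v)
   | Inr (\<tau>, j, i) \<Rightarrow>
       (if sep_fm q \<in> \<tau> then Inr (\<tau>', Suc j mod 3, Sep \<tau> q v)
        else Inr (\<tau>', Suc j mod 3, Owned q v)))"

definition first_var :: "(nat \<Rightarrow> 'b) \<Rightarrow> nat list \<Rightarrow> nat \<Rightarrow> nat" where
  "first_var w ys v = (LEAST u. u \<in> set ys \<and> w u = w v)"

definition lift :: "'a elem \<Rightarrow> request \<Rightarrow> nat \<Rightarrow> 'a elem" where
  "lift c0 q v = (let w = req_witness c0 q in
     if w v = w (req_var q) then c0
     else if rare (type_of (w v)) then Inl (w v)
     else fresh_copy c0 q (type_of (w v)) (first_var w (req_block q) v))"

definition active :: "'a elem \<Rightarrow> request \<Rightarrow> bool" where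
  "active c0 q \<longleftrightarrow> c0 \<in> small_dom \<and> q \<in> requests \<and> Exs (req_block q) (req_body q) \<in> small_type c0"

text \<open>The set E is owned by (c0, q) if it is the atom tuple of the lifted witness of q at c0 and
  it contains both c0 and one of its Owned copies; its pullback is then the witness itself.\<close>

definition owner :: "'a elem set \<Rightarrow> 'a elem \<times> request \<Rightarrow> bool" where
  "owner E r \<longleftrightarrow> (case r of (c0, q) \<Rightarrow> active c0 q \<and>
     (\<exists>\<tau> j i. c0 = Inr (\<tau>, j, i) \<and> sep_fm q \<notin> \<tau> \<and> (\<exists>e\<in>E. layer e = Some (Suc j mod 3))) \<and>
     E = lift c0 q ` req_atoms q \<and> c0 \<in> E)"

definition owner_map :: "'a elem \<times> request \<Rightarrow> 'a elem \<Rightarrow> 'a" where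
  "owner_map r c = (case r of (c0, q) \<Rightarrow> req_witness c0 q (SOME v. lift c0 q v = c))"

definition faithful :: "('a elem \<Rightarrow> 'a) \<Rightarrow> 'a elem set \<Rightarrow> bool" where
  "faithful f E \<longleftrightarrow> inj_on f E \<and> (\<forall>c\<in>E. f c \<in> D \<and> type_of (f c) = small_type c)"

definition pullback :: "'a elem set \<Rightarrow> 'a elem \<Rightarrow> 'a" where
  "pullback E =
     (if \<exists>r. owner E r then owner_map (SOME r. owner E r)
      else if inj_on proj E then proj
      else (SOME f. faithful f E))"

definition small_interp :: "nat \<Rightarrow> 'a elem list \<Rightarrow> bool" where
  "small_interp R t = I R (map (pullback (set t)) t)"

lemma rel_var_sets_subset:
  "{set zs | R zs. Rel R zs \<in> subformulas \<phi>} \<subseteq>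
     (\<lambda>\<psi>. case \<psi> of Rel R zs \<Rightarrow> set zs | _ \<Rightarrow> {}) ` subformulas \<phi>"
  by (auto intro: image_eqI[of _ _ "Rel _ _"])

lemma finite_rel_var_sets: "finite {set zs | R zs. Rel R zs \<in> subformulas \<phi>}"
  using rel_var_sets_subset by (rule finite_subset) simp

lemma finite_atom_sets: "finite atom_sets"
  unfolding atom_sets_def using finite_rel_var_sets by simp

lemma finite_atom_set: "V \<in> atom_sets \<Longrightarrow> finite V"
  unfolding atom_sets_def by auto

lemma finite_var_set: "finite var_set"
  unfolding var_set_def by simp

lemma fresh_var_notin: "fresh_var \<notin> vars \<phi>"
proof
  assume "fresh_var \<in> vars \<phi>"
  then have "fresh_var \<le> Max (insert 0 (vars \<phi>))" by simp
  then show False unfolding fresh_var_def by simp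
qed

lemma requestsD:
  "q \<in> requests \<Longrightarrow> Exs (req_block q) (req_body q) \<in> subformulas \<phi> \<and> req_var q \<in> var_set \<and>
     req_var q \<notin> set (req_block q) \<and> req_atoms q \<in> atom_sets"
  unfolding requests_def by auto

lemma set_req_block: "q \<in> requests \<Longrightarrow> set (req_block q) \<subseteq> var_set"
  using requestsD Exs_subformula unfolding var_set_def by blast

lemma request_code_subset:
  "request_code ` requests \<subseteq> var_set \<times> subformulas \<phi> \<times> subformulas \<phi> \<times> atom_sets"
  using requestsD Exs_subformula unfolding request_code_def by blast

lemma finite_requests: "finite requests"
proof -
  have "finite (request_code ` requests)"
    using request_code_subset by (rule finite_subset) (simp add: finite_var_set finite_atom_sets)
  then show ?thesis using inj_request_code by (simp add: finite_image_iff inj_on_subset)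
qed

lemma finite_type_fms: "finite type_fms"
  unfolding type_fms_def using finite_requests by simp

lemma type_of_subset: "type_of b \<subseteq> type_fms"
  unfolding type_of_def by auto

lemma Types_subset: "Types \<subseteq> Pow type_fms"
  unfolding Types_def using type_of_subset by auto

lemma finite_Types: "finite Types"
  using Types_subset finite_type_fms finite_subset by blast

lemma rep_realizes: "\<tau> \<in> Types \<Longrightarrow> rep \<tau> \<in> D \<and> type_of (rep \<tau>) = \<tau>"
  unfolding rep_def Types_def by (rule someI_ex) auto

lemma request_type_fm: "q \<in> requests \<Longrightarrow> Exs (req_block q) (req_body q) \<in> type_fms"
  using requestsD unfolding type_fms_def by auto

lemma sep_fm_type_fm: "q \<in> requests \<Longrightarrow> sep_fm q \<in> type_fms"
  unfolding type_fms_def by auto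

lemma mem_type_of: "\<theta> \<in> type_fms \<Longrightarrow> \<theta> \<in> type_of b \<longleftrightarrow> sat D I (\<lambda>_. b) \<theta>"
  unfolding type_of_def by auto

lemma sat_iff_mem_type_of:
  assumes "\<psi> \<in> type_fms" "fv \<psi> \<subseteq> {x}"
  shows "sat D I \<beta> \<psi> \<longleftrightarrow> \<psi> \<in> type_of (\<beta> x)"
proof -
  have "sat D I \<beta> \<psi> \<longleftrightarrow> sat D I (\<lambda>_. \<beta> x) \<psi>" using assms(2) by (intro sat_cong_fv) auto
  then show ?thesis using mem_type_of[OF assms(1)] by simp
qed

lemma witness_is_witness:
  assumes q: "q \<in> requests" and b: "b \<in> D" and "Exs (req_block q) (req_body q) \<in> type_of b"
  shows "is_witness b q (witness b q)"
proof -
  have "sat D I (\<lambda>_. b) (Exs (req_block q) (req_body q))"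
    using assms mem_type_of request_type_fm by blast
  then have "\<exists>w. is_witness b q w"
    unfolding sat_Exs is_witness_def using b by metis
  then show ?thesis unfolding witness_def by (rule someI_ex)
qed

lemma is_witness_var: "q \<in> requests \<Longrightarrow> is_witness b q w \<Longrightarrow> w (req_var q) = b"
  unfolding is_witness_def using requestsD by blast

lemma sep_fm_in_type_of:
  assumes q: "q \<in> requests" and b: "b \<in> D"
  shows "sep_fm q \<in> type_of b \<longleftrightarrow> (\<exists>w. is_witness b q w \<and> w (req_var q) \<notin> w ` req_atoms q)"
proof -
  have fin: "finite (req_atoms q)" using requestsD[OF q] finite_atom_set by blast
  have "sep_fm q \<in> type_of b \<longleftrightarrow> sat D I (\<lambda>_. b) (sep_fm q)"
    using mem_type_of sep_fm_type_fm q by blast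
  also have "\<dots> \<longleftrightarrow> (\<exists>w. is_witness b q w \<and> w (req_var q) \<notin> w ` req_atoms q)"
    unfolding sep_fm_def sat_Exs is_witness_def using b
    by (auto simp: sat_Neq_all fin)
  finally show ?thesis .
qed

lemma sep_witness_is_witness:
  assumes "q \<in> requests" "\<tau> \<in> Types" "sep_fm q \<in> \<tau>"
  shows "is_witness (rep \<tau>) q (sep_witness \<tau> q)"
    and "sep_witness \<tau> q (req_var q) \<notin> sep_witness \<tau> q ` req_atoms q"
  using sep_fm_in_type_of[of q "rep \<tau>"] rep_realizes[of \<tau>] assms
  unfolding sep_witness_def by (metis (mono_tags, lifting) someI_ex)+

lemma labels_I:
  "q \<in> requests \<Longrightarrow> v \<in> var_set \<Longrightarrow> Owned q v \<in> labels"
  "\<tau> \<in> Types \<Longrightarrow> q \<in> requests \<Longrightarrow> v \<in> var_set \<Longrightarrow> Sep \<tau> q v \<in> labels"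
  "a \<in> rare_elems \<Longrightarrow> q \<in> requests \<Longrightarrow> v \<in> var_set \<Longrightarrow> From_rare a q v \<in> labels"
  "v \<in> var_set \<Longrightarrow> Plain v \<in> labels"
  unfolding labels_def by force+

lemma small_dom_Inl_iff: "Inl d \<in> small_dom \<longleftrightarrow> d \<in> rare_elems"
  unfolding small_dom_def by auto

lemma small_dom_Inr_iff:
  "Inr (\<tau>, j, i) \<in> small_dom \<longleftrightarrow> \<tau> \<in> Types \<and> \<not> rare \<tau> \<and> j < 3 \<and> i \<in> labels"
  unfolding small_dom_def by auto

lemma small_dom_layer_less: "c \<in> small_dom \<Longrightarrow> layer c = Some k \<Longrightarrow> k < 3"
  unfolding small_dom_def layer_def by auto

lemma proj_realizes: "c \<in> small_dom \<Longrightarrow> proj c \<in> D \<and> type_of (proj c) = small_type c"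
proof (cases c)
  case (Inl d)
  then show "c \<in> small_dom \<Longrightarrow> ?thesis"
    by (simp add: small_dom_Inl_iff rare_elems_def proj_def small_type_def)
next
  case (Inr p)
  obtain \<tau>' j i where p: "c = Inr (\<tau>', j, i)" using Inr by (cases p) auto
  assume "c \<in> small_dom"
  then have "rep \<tau>' \<in> D \<and> type_of (rep \<tau>') = \<tau>'"
    using rep_realizes small_dom_Inr_iff p by blast
  then show ?thesis unfolding p proj_def small_type_def by (cases i) auto
qed

section \<open>Lifting witnesses into the small model\<close>

lemma activeD:
  assumes "active c0 q"
  shows "c0 \<in> small_dom" "q \<in> requests" "Exs (req_block q) (req_body q) \<in> small_type c0"
  using assms unfolding active_def by auto

lemma req_witness_realizes:
  assumes a: "active c0 q"
  shows "\<exists>b. b \<in> D \<and> type_of b = small_type c0 \<and> is_witness b q (req_witness c0 q)"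
proof (cases c0)
  case (Inl d)
  then have d: "d \<in> D" "type_of d = small_type c0"
    using activeD(1)[OF a] by (auto simp: small_dom_Inl_iff rare_elems_def small_type_def)
  then have "is_witness d q (witness d q)"
    using witness_is_witness activeD(2,3)[OF a] by simp
  then show ?thesis using d Inl by (auto simp: req_witness_def)
next
  case (Inr p)
  then obtain \<tau> j i where c0: "c0 = Inr (\<tau>, j, i)" by (cases p) auto
  have \<tau>: "\<tau> \<in> Types" "small_type c0 = \<tau>"
    using activeD(1)[OF a] by (auto simp: c0 small_dom_Inr_iff small_type_def)
  show ?thesis
  proof (cases "sep_fm q \<in> \<tau>")
    case True
    then have "is_witness (rep \<tau>) q (req_witness c0 q)"
      using sep_witness_is_witness(1) \<tau>(1) activeD(2)[OF a] by (simp add: c0 req_witness_def)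
    then show ?thesis using rep_realizes[OF \<tau>(1)] \<tau>(2) by auto
  next
    case False
    have p: "proj c0 \<in> D" "type_of (proj c0) = \<tau>"
      using proj_realizes activeD(1)[OF a] \<tau>(2) by auto
    then have "is_witness (proj c0) q (req_witness c0 q)"
      using witness_is_witness activeD(2,3)[OF a] False \<tau>(2) by (simp add: c0 req_witness_def)
    then show ?thesis using p \<tau>(2) by auto
  qed
qed

lemma is_witness_req_witness:
  "active c0 q \<Longrightarrow> is_witness (req_witness c0 q (req_var q)) q (req_witness c0 q)"
  using req_witness_realizes is_witness_var activeD(2) by metis

lemma type_of_req_witness_var:
  "active c0 q \<Longrightarrow> type_of (req_witness c0 q (req_var q)) = small_type c0"
  using req_witness_realizes is_witness_var activeD(2) by metis

lemma req_witness_in_D: "active c0 q \<Longrightarrow> req_witness c0 q v \<in> D"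
  using is_witness_req_witness unfolding is_witness_def by blast

lemma req_witness_outside:
  "active c0 q \<Longrightarrow> v \<notin> set (req_block q) \<Longrightarrow> req_witness c0 q v = req_witness c0 q (req_var q)"
  using is_witness_req_witness unfolding is_witness_def by blast

lemma req_witness_sat: "active c0 q \<Longrightarrow> sat D I (req_witness c0 q) (req_body q)"
  using is_witness_req_witness unfolding is_witness_def by blast

lemma req_witness_var_Inl:
  assumes a: "active (Inl a) q"
  shows "req_witness (Inl a) q (req_var q) = a"
proof -
  have "a \<in> D" "Exs (req_block q) (req_body q) \<in> type_of a"
    using activeD[OF a] by (auto simp: small_dom_Inl_iff rare_elems_def small_type_def)
  then have "is_witness a q (witness a q)" using witness_is_witness activeD(2)[OF a] by blast
  then show ?thesis using is_witness_var activeD(2)[OF a] by (simp add: req_witness_def)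
qed

lemma req_witness_var_sep:
  assumes "active c0 q" "c0 = Inr (\<tau>, j, i)" "sep_fm q \<in> \<tau>"
  shows "req_witness c0 q (req_var q) \<notin> req_witness c0 q ` req_atoms q"
  using sep_witness_is_witness(2)[of q \<tau>] assms activeD[OF assms(1)]
  by (simp add: req_witness_def small_dom_Inr_iff)

lemma req_witness_var_owned:
  assumes a: "active c0 q" and c0: "c0 = Inr (\<tau>, j, i)" and \<tau>: "sep_fm q \<notin> \<tau>"
  shows "req_witness c0 q (req_var q) = proj c0"
    and "req_witness c0 q (req_var q) \<in> req_witness c0 q ` req_atoms q"
proof -
  have w: "req_witness c0 q = witness (proj c0) q" using \<tau> by (simp add: c0 req_witness_def)
  have p: "proj c0 \<in> D" "type_of (proj c0) = \<tau>"
    using proj_realizes[OF activeD(1)[OF a]] by (auto simp: c0 small_type_def)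
  have "is_witness (proj c0) q (witness (proj c0) q)"
    using witness_is_witness activeD[OF a] p by (simp add: c0 small_type_def)
  then show "req_witness c0 q (req_var q) = proj c0"
    using is_witness_var activeD(2)[OF a] w by simp
  then show "req_witness c0 q (req_var q) \<in> req_witness c0 q ` req_atoms q"
    using sep_fm_in_type_of[OF activeD(2)[OF a] p(1)] is_witness_req_witness[OF a] p(2) \<tau>
    by metis
qed

lemma first_var_spec:
  "v \<in> set ys \<Longrightarrow> first_var w ys v \<in> set ys \<and> w (first_var w ys v) = w v"
  unfolding first_var_def by (rule LeastI[of "\<lambda>u. u \<in> set ys \<and> w u = w v" v]) simp

lemma Suc_mod_3_neq: "Suc j mod 3 \<noteq> j"
  by presburger

lemma layer_fresh_copy:
  "c0 = Inl a \<Longrightarrow> layer (fresh_copy c0 q \<tau>' v) = Some 0"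
  "c0 = Inr (\<tau>, j, i) \<Longrightarrow> layer (fresh_copy c0 q \<tau>' v) = Some (Suc j mod 3)"
  unfolding fresh_copy_def layer_def by simp_all

lemma fresh_copy_neq: "fresh_copy c0 q \<tau>' v \<noteq> c0" "fresh_copy c0 q \<tau>' v \<noteq> Inl d"
  unfolding fresh_copy_def by (auto simp: Suc_mod_3_neq split: sum.splits prod.splits)

lemma fresh_copy_Owned:
  "c0 = Inr (\<tau>, j, i) \<Longrightarrow> sep_fm q \<notin> \<tau> \<Longrightarrow> fresh_copy c0 q \<tau>' v = Inr (\<tau>', Suc j mod 3, Owned q v)"
  unfolding fresh_copy_def by simp

lemma label_var_fresh_copy: "fresh_copy c0 q \<tau>' v = Inr (\<tau>'', j, i) \<Longrightarrow> label_var i = v"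
  unfolding fresh_copy_def by (auto split: sum.splits prod.splits if_splits)

lemma lift_var: "lift c0 q (req_var q) = c0"
  unfolding lift_def by simp

lemma lift_cases:
  "lift c0 q v = c0 \<or> (\<exists>d. lift c0 q v = Inl d) \<or>
   lift c0 q v =
     fresh_copy c0 q (type_of (req_witness c0 q v)) (first_var (req_witness c0 q) (req_block q) v)"
  unfolding lift_def Let_def by simp

lemma lift_small_dom:
  assumes a: "active c0 q"
  shows "lift c0 q v \<in> small_dom"
proof -
  let ?w = "req_witness c0 q"
  have c0: "c0 \<in> small_dom" and q: "q \<in> requests" using activeD[OF a] by auto
  have wD: "?w v \<in> D" using req_witness_in_D[OF a] .
  then have ty: "type_of (?w v) \<in> Types" unfolding Types_def by simp
  show ?thesis
  proof (cases "?w v = ?w (req_var q)")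
    case False
    then have "first_var ?w (req_block q) v \<in> var_set"
      using first_var_spec req_witness_outside[OF a] set_req_block[OF q] by blast
    then have "fresh_copy c0 q (type_of (?w v)) (first_var ?w (req_block q) v) \<in> small_dom"
      if "\<not> rare (type_of (?w v))"
      using c0 ty that q
      by (cases c0) (auto simp: fresh_copy_def small_dom_Inl_iff small_dom_Inr_iff labels_I)
    then show ?thesis
      using False wD by (auto simp: lift_def Let_def small_dom_Inl_iff rare_elems_def)
  qed (use c0 in \<open>simp add: lift_def\<close>)
qed

lemma small_type_lift: "active c0 q \<Longrightarrow> small_type (lift c0 q v) = type_of (req_witness c0 q v)"
  using type_of_req_witness_var[of c0 q]
  unfolding lift_def fresh_copy_def small_type_def
  by (auto simp: Let_def split: sum.splits prod.splits)

lemma lift_eq_iff: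
  assumes a: "active c0 q"
  shows "lift c0 q v = lift c0 q u \<longleftrightarrow> req_witness c0 q v = req_witness c0 q u"
proof
  let ?w = "req_witness c0 q"
  txt \<open>A lifted element determines the witness value: the centre stands for the value at
    req_var q, a rare element for itself, and a fresh copy for the value at its label variable.\<close>
  define decode where "decode c = (if c = c0 then ?w (req_var q)
    else case c of Inl d \<Rightarrow> d | Inr (_, _, i) \<Rightarrow> ?w (label_var i))" for c
  have decode_lift: "decode (lift c0 q v) = ?w v" for v
  proof (cases "?w v = ?w (req_var q)")
    case False
    have "Inl (?w v) \<noteq> c0"
      using False req_witness_var_Inl[of _ q] a by (cases c0) auto
    moreover have "?w (first_var ?w (req_block q) v) = ?w v"
      using first_var_spec req_witness_outside[OF a] False by blast
    ultimately show ?thesis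
      using False fresh_copy_neq(1) label_var_fresh_copy
      unfolding lift_def decode_def Let_def
      by (auto split: sum.split prod.split dest: sym[of c0] intro: fresh_copy_neq(2)[THEN notE])
  qed (simp add: lift_def decode_def)
  show "lift c0 q v = lift c0 q u \<Longrightarrow> ?w v = ?w u"
    using decode_lift by metis
next
  show "req_witness c0 q v = req_witness c0 q u \<Longrightarrow> lift c0 q v = lift c0 q u"
    unfolding lift_def first_var_def by (simp add: Let_def)
qed

section \<open>Ownership and the pullback\<close>

lemma owner_iff:
  "owner E (c0, q) \<longleftrightarrow> active c0 q \<and>
     (\<exists>\<tau> j i. c0 = Inr (\<tau>, j, i) \<and> sep_fm q \<notin> \<tau> \<and> (\<exists>e\<in>E. layer e = Some (Suc j mod 3))) \<and>
     E = lift c0 q ` req_atoms q \<and> c0 \<in> E"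
  unfolding owner_def by simp

lemma single_layer_not_owner:
  assumes single: "\<forall>e\<in>E. layer e = None \<or> layer e = Some k"
  shows "\<not> owner E r"
proof
  assume "owner E r"
  then obtain c0 q where "owner E (c0, q)" by (cases r) auto
  then obtain \<tau> j i e where c0: "c0 \<in> E" "c0 = Inr (\<tau>, j, i)"
    and e: "e \<in> E" "layer e = Some (Suc j mod 3)"
    unfolding owner_iff by blast
  have "j = k" using single c0 by (auto simp: layer_def)
  moreover have "Suc j mod 3 = k" using single e by auto
  ultimately show False using Suc_mod_3_neq by blast
qed

lemma owner_layers:
  assumes o: "owner E (c0, q)" and c0: "c0 = Inr (\<tau>, j, i)"
  shows "\<forall>e\<in>E. e = c0 \<or> layer e = None \<or> (\<exists>\<tau>' v. e = Inr (\<tau>', Suc j mod 3, Owned q v))"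
    and "\<exists>e\<in>E. layer e = Some (Suc j mod 3)" "c0 \<in> E" "j < 3"
proof -
  have o': "sep_fm q \<notin> \<tau>" "\<exists>e\<in>E. layer e = Some (Suc j mod 3)" "E = lift c0 q ` req_atoms q"
    "c0 \<in> E" "active c0 q"
    using o c0 by (auto simp: owner_iff)
  show "\<forall>e\<in>E. e = c0 \<or> layer e = None \<or> (\<exists>\<tau>' v. e = Inr (\<tau>', Suc j mod 3, Owned q v))"
  proof
    fix e assume "e \<in> E"
    then obtain v where "e = lift c0 q v" using o'(3) by blast
    then show "e = c0 \<or> layer e = None \<or> (\<exists>\<tau>' v. e = Inr (\<tau>', Suc j mod 3, Owned q v))"
      using lift_cases[of c0 q v] fresh_copy_Owned[OF c0 o'(1)] by (auto simp: layer_def)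
  qed
  show "j < 3" using small_dom_layer_less activeD(1)[OF o'(5)] by (simp add: c0 layer_def)
  show "\<exists>e\<in>E. layer e = Some (Suc j mod 3)" "c0 \<in> E" using o' by auto
qed

lemma owner_unique:
  assumes o1: "owner E (c1, q1)" and o2: "owner E (c2, q2)"
  shows "(c1, q1) = (c2, q2)"
proof -
  obtain \<tau>1 j1 i1 where c1: "c1 = Inr (\<tau>1, j1, i1)" using o1 unfolding owner_iff by blast
  obtain \<tau>2 j2 i2 where c2: "c2 = Inr (\<tau>2, j2, i2)" using o2 unfolding owner_iff by blast
  note L1 = owner_layers[OF o1 c1] and L2 = owner_layers[OF o2 c2]
  txt \<open>Otherwise each centre would be a copy of the other, one layer above it (mod 3).\<close>
  have "c1 = c2"
  proof (rule ccontr)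
    assume ne: "c1 \<noteq> c2"
    have "j2 = Suc j1 mod 3" using L1(1) L2(3) ne c2 by (auto simp: layer_def)
    moreover have "j1 = Suc j2 mod 3" using L2(1) L1(3) ne c1 by (auto simp: layer_def)
    ultimately show False using L1(4) by presburger
  qed
  moreover have "q1 = q2"
  proof -
    obtain e where e: "e \<in> E" "layer e = Some (Suc j1 mod 3)" using L1(2) by blast
    then have "e \<noteq> c1" using Suc_mod_3_neq[of j1] by (auto simp: c1 layer_def)
    then have "\<exists>\<tau>' v. e = Inr (\<tau>', Suc j1 mod 3, Owned q1 v)"
      "\<exists>\<tau>' v. e = Inr (\<tau>', Suc j2 mod 3, Owned q2 v)"
      using L1(1) L2(1) e \<open>c1 = c2\<close> by (auto simp: layer_def)
    then show ?thesis by auto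
  qed
  ultimately show ?thesis by simp
qed

lemma pullback_owner: "owner E r \<Longrightarrow> pullback E = owner_map r"
  unfolding pullback_def using owner_unique by (metis (mono_tags, lifting) someI_ex surj_pair)

lemma owner_map_lift:
  assumes a: "active c0 q"
  shows "owner_map (c0, q) (lift c0 q v) = req_witness c0 q v"
proof -
  have "lift c0 q (SOME u. lift c0 q u = lift c0 q v) = lift c0 q v" by (rule someI) (rule refl)
  then show ?thesis unfolding owner_map_def using lift_eq_iff[OF a] by simp
qed

lemma proj_lift:
  assumes a: "active c0 q"
    and not_owned: "\<And>\<tau> j i. c0 = Inr (\<tau>, j, i) \<Longrightarrow> sep_fm q \<notin> \<tau> \<Longrightarrow>
      layer (lift c0 q v) \<noteq> Some (Suc j mod 3)"
    and centre: "\<And>\<tau> j i. c0 = Inr (\<tau>, j, i) \<Longrightarrow> req_witness c0 q v = req_witness c0 q (req_var q) \<Longrightarrow>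
      sep_fm q \<notin> \<tau>"
  shows "proj (lift c0 q v) = req_witness c0 q v"
proof (cases "req_witness c0 q v = req_witness c0 q (req_var q)")
  case True
  then show ?thesis
    using centre req_witness_var_Inl[of _ q] req_witness_var_owned(1)[OF a] a
    by (cases c0) (auto simp: lift_def proj_def)
next
  case ne: False
  let ?w = "req_witness c0 q" and ?v = "first_var (req_witness c0 q) (req_block q) v"
  have w_v: "?w ?v = ?w v" and wD: "?w v \<in> D"
    using first_var_spec req_witness_outside[OF a] ne req_witness_in_D[OF a] by blast+
  show ?thesis
  proof (cases "rare (type_of (?w v))")
    case nr: False
    then have lift: "lift c0 q v = fresh_copy c0 q (type_of (?w v)) ?v"
      using ne by (simp add: lift_def Let_def)
    show ?thesis
    proof (cases c0)
      case (Inl a')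
      then show ?thesis using lift w_v wD by (simp add: fresh_copy_def proj_def req_witness_def)
    next
      case (Inr p)
      then obtain \<tau> j i where c0: "c0 = Inr (\<tau>, j, i)" by (cases p) auto
      then have "sep_fm q \<in> \<tau>"
        using not_owned layer_fresh_copy(2)[OF c0] lift by metis
      then show ?thesis using lift w_v wD c0 by (simp add: fresh_copy_def proj_def req_witness_def)
    qed
  qed (use ne in \<open>simp add: lift_def proj_def\<close>)
qed

lemma layer_lift_cases:
  "lift c0 q v = c0 \<or> layer (lift c0 q v) = None \<or> (\<exists>\<tau>' v'. lift c0 q v = fresh_copy c0 q \<tau>' v')"
  using lift_cases[of c0 q v] by (auto simp: layer_def)

lemma lift_single_layer:
  assumes a: "active c0 q"
    and not_owned: "\<And>\<tau> j i. c0 = Inr (\<tau>, j, i) \<Longrightarrow> sep_fm q \<notin> \<tau> \<Longrightarrow>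
      \<forall>e\<in>lift c0 q ` req_atoms q. layer e \<noteq> Some (Suc j mod 3)"
  shows "\<exists>k. \<forall>e\<in>lift c0 q ` req_atoms q. layer e = None \<or> layer e = Some k"
proof (cases c0)
  case (Inl a)
  have "layer c0 = None" using Inl by (simp add: layer_def)
  then have "layer (lift c0 q v) = None \<or> layer (lift c0 q v) = Some 0" for v
    using layer_lift_cases[of c0 q v] layer_fresh_copy(1)[OF Inl] by metis
  then show ?thesis by (intro exI[of _ 0]) auto
next
  case (Inr p)
  then obtain \<tau> j i where c0: "c0 = Inr (\<tau>, j, i)" by (cases p) auto
  show ?thesis
  proof (cases "sep_fm q \<in> \<tau>")
    case True
    have "layer e = None \<or> layer e = Some (Suc j mod 3)" if e: "e \<in> lift c0 q ` req_atoms q" for e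
    proof -
      obtain v where v: "v \<in> req_atoms q" "e = lift c0 q v" using e by blast
      then have "lift c0 q v \<noteq> c0"
        using req_witness_var_sep[OF a c0 True] lift_eq_iff[OF a, of v "req_var q"] lift_var
        by (metis image_eqI)
      then show ?thesis using v(2) layer_lift_cases[of c0 q v] layer_fresh_copy(2)[OF c0] by metis
    qed
    then show ?thesis by (intro exI[of _ "Suc j mod 3"]) auto
  next
    case False
    have "layer c0 = Some j" using c0 by (simp add: layer_def)
    have "layer e = None \<or> layer e = Some j" if e: "e \<in> lift c0 q ` req_atoms q" for e
    proof -
      obtain v where v: "v \<in> req_atoms q" "e = lift c0 q v" using e by blast
      then show ?thesis
        using \<open>layer c0 = Some j\<close> layer_lift_cases[of c0 q v] layer_fresh_copy(2)[OF c0]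
          not_owned[OF c0 False] e
        by metis
    qed
    then show ?thesis by (intro exI[of _ j]) auto
  qed
qed

lemma pullback_lift:
  assumes a: "active c0 q" and v: "v \<in> req_atoms q"
  shows "pullback (lift c0 q ` req_atoms q) (lift c0 q v) = req_witness c0 q v"
proof -
  let ?E = "lift c0 q ` req_atoms q" and ?w = "req_witness c0 q"
  show ?thesis
  proof (cases "\<exists>\<tau> j i. c0 = Inr (\<tau>, j, i) \<and> sep_fm q \<notin> \<tau> \<and> (\<exists>e\<in>?E. layer e = Some (Suc j mod 3))")
    case True
    then obtain \<tau> j i where c0: "c0 = Inr (\<tau>, j, i)" "sep_fm q \<notin> \<tau>" by blast
    obtain u where "u \<in> req_atoms q" "?w u = ?w (req_var q)"
      using req_witness_var_owned(2)[OF a c0] by auto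
    then have "c0 \<in> ?E" using lift_eq_iff[OF a] lift_var by (metis image_eqI)
    then have "owner ?E (c0, q)" using True a by (simp add: owner_iff)
    then show ?thesis using pullback_owner owner_map_lift[OF a] by simp
  next
    case False
    have proj_lift_atoms: "proj (lift c0 q u) = ?w u" if u: "u \<in> req_atoms q" for u
    proof (rule proj_lift[OF a])
      fix \<tau> j i assume "c0 = Inr (\<tau>, j, i)" "sep_fm q \<notin> \<tau>"
      then show "layer (lift c0 q u) \<noteq> Some (Suc j mod 3)" using False u by blast
    next
      fix \<tau> j i assume c0: "c0 = Inr (\<tau>, j, i)" and "?w u = ?w (req_var q)"
      then show "sep_fm q \<notin> \<tau>" using req_witness_var_sep[OF a c0] u by (metis image_eqI)
    qed
    have "inj_on proj ?E"
    proof (rule inj_onI)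
      fix x y assume "x \<in> ?E" "y \<in> ?E" "proj x = proj y"
      then obtain u1 u2 where "u1 \<in> req_atoms q" "u2 \<in> req_atoms q"
        "x = lift c0 q u1" "y = lift c0 q u2" "proj x = proj y"
        by blast
      then show "x = y" using proj_lift_atoms lift_eq_iff[OF a] by metis
    qed
    moreover obtain k where "\<forall>e\<in>?E. layer e = None \<or> layer e = Some k"
      using lift_single_layer[OF a] False by blast
    then have "\<nexists>r. owner ?E r" using single_layer_not_owner by blast
    ultimately show ?thesis using proj_lift_atoms v by (simp add: pullback_def)
  qed
qed

section \<open>Faithful maps\<close>

lemma small_dom_rare_type:
  assumes "rare \<tau>"
  shows "{c \<in> small_dom. small_type c = \<tau>} = Inl ` realizers \<tau>"
proof
  show "{c \<in> small_dom. small_type c = \<tau>} \<subseteq> Inl ` realizers \<tau>"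
  proof
    fix c assume c: "c \<in> {c \<in> small_dom. small_type c = \<tau>}"
    show "c \<in> Inl ` realizers \<tau>"
    proof (cases c)
      case (Inl d)
      then show ?thesis
        using c by (auto simp: small_dom_Inl_iff rare_elems_def realizers_def small_type_def)
    next
      case (Inr p)
      then obtain \<tau>' j i where "c = Inr (\<tau>', j, i)" by (cases p) auto
      then show ?thesis using c assms by (auto simp: small_dom_Inr_iff small_type_def)
    qed
  qed
  show "Inl ` realizers \<tau> \<subseteq> {c \<in> small_dom. small_type c = \<tau>}"
    using assms by (auto simp: small_dom_Inl_iff rare_elems_def realizers_def small_type_def)
qed

text \<open>Rare types are realized in the small model exactly as often as in D, and every other type
  is realized at least width times in D; hence a faithful map can always be extended.\<close>

lemma faithful_insert:
  assumes S: "finite S" "S \<subseteq> small_dom" "card S \<le> width"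
    and B: "B \<subseteq> S" and c: "c \<in> S" "c \<notin> B" and h: "faithful h B"
  shows "\<exists>d. faithful (h(c := d)) (insert c B)"
proof -
  let ?\<tau> = "small_type c"
  let ?B\<tau> = "{x \<in> B. small_type x = ?\<tau>}"
  have finB: "finite B" using B S(1) finite_subset by blast
  have "\<not> realizers ?\<tau> \<subseteq> h ` B"
  proof
    assume sub: "realizers ?\<tau> \<subseteq> h ` B"
    have fin: "finite (realizers ?\<tau>)" using sub finB finite_surj by blast
    have "realizers ?\<tau> \<subseteq> h ` ?B\<tau>"
      using sub h unfolding faithful_def realizers_def by auto
    then have "card (realizers ?\<tau>) \<le> card (h ` ?B\<tau>)" using finB by (intro card_mono) auto
    also have "\<dots> \<le> card ?B\<tau>" using finB by (intro card_image_le) auto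
    finally have le: "card (realizers ?\<tau>) \<le> card ?B\<tau>" .
    show False
    proof (cases "rare ?\<tau>")
      case True
      have "insert c ?B\<tau> \<subseteq> Inl ` realizers ?\<tau>"
        unfolding small_dom_rare_type[OF True, symmetric] using B c S(2) by auto
      then have "card (insert c ?B\<tau>) \<le> card (Inl ` realizers ?\<tau> :: 'a elem set)"
        using fin by (intro card_mono) auto
      also have "\<dots> = card (realizers ?\<tau>)" by (simp add: card_image)
      finally show False using le finB c(2) by simp
    next
      case False
      have "card ?B\<tau> \<le> card B" using finB by (intro card_mono) auto
      moreover have "card B < card S" using B c S(1) by (intro psubset_card_mono) auto
      ultimately show False using le False fin S(3) by (simp add: rare_def)
    qed
  qed
  then obtain d where d: "d \<in> realizers ?\<tau>" "d \<notin> h ` B" by blast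
  have "inj_on (h(c := d)) (insert c B)"
    using h d(2) c(2) unfolding faithful_def by (auto intro: inj_on_fun_updI)
  moreover have "\<forall>x\<in>insert c B. (h(c := d)) x \<in> D \<and> type_of ((h(c := d)) x) = small_type x"
    using h d(1) c(2) unfolding faithful_def realizers_def by auto
  ultimately show ?thesis unfolding faithful_def by blast
qed

lemma faithful_extend:
  assumes S: "finite S" "S \<subseteq> small_dom" "card S \<le> width" and E: "E \<subseteq> S" and f: "faithful f E"
  shows "\<exists>h. faithful h S \<and> (\<forall>c\<in>E. h c = f c)"
proof -
  have "A \<subseteq> S - E \<Longrightarrow> \<exists>h. faithful h (E \<union> A) \<and> (\<forall>c\<in>E. h c = f c)" for A
  proof (induction A rule: infinite_finite_induct)
    case (infinite A) then show ?case using S(1) finite_subset by blast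
  next
    case empty then show ?case using f by auto
  next
    case (insert c A)
    then obtain h where h: "faithful h (E \<union> A)" "\<forall>c\<in>E. h c = f c" by blast
    have c: "E \<union> A \<subseteq> S" "c \<in> S" "c \<notin> E \<union> A" using insert.prems insert.hyps(2) E by auto
    then obtain d where "faithful (h(c := d)) (insert c (E \<union> A))"
      using faithful_insert[OF S _ _ _ h(1)] by blast
    moreover have "\<forall>x\<in>E. (h(c := d)) x = f x" using h(2) c(3) by auto
    ultimately show ?case by (metis Un_insert_right)
  qed
  moreover have "E \<union> (S - E) = S" using E by blast
  ultimately show ?thesis by (metis order_refl)
qed

lemma faithful_owner_map:
  assumes a: "active c0 q"
  shows "faithful (owner_map (c0, q)) (lift c0 q ` V)"
  unfolding faithful_def
  using owner_map_lift[OF a] lift_eq_iff[OF a] req_witness_in_D[OF a] small_type_lift[OF a]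
  by (auto intro!: inj_onI)

lemma faithful_pullback:
  assumes E: "finite E" "E \<subseteq> small_dom" "card E \<le> width"
  shows "faithful (pullback E) E"
proof (cases "\<exists>r. owner E r")
  case True
  then obtain c0 q where o: "owner E (c0, q)" by auto
  then have "active c0 q" "E = lift c0 q ` req_atoms q" unfolding owner_iff by blast+
  then show ?thesis using pullback_owner[OF o] faithful_owner_map by simp
next
  case not_owner: False
  show ?thesis
  proof (cases "inj_on proj E")
    case True
    then show ?thesis using not_owner proj_realizes E(2) by (auto simp: pullback_def faithful_def)
  next
    case False
    have "\<exists>f. faithful f E" using faithful_extend[OF E, of "{}" proj] by (auto simp: faithful_def)
    then have "faithful (SOME f. faithful f E) E" by (rule someI_ex)
    then show ?thesis using not_owner False unfolding pullback_def by simp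
  qed
qed

lemma pullback_singleton: "pullback {c} = proj"
proof -
  have "\<forall>e\<in>{c}. layer e = None \<or> layer e = Some (the (layer c))" by (cases "layer c") auto
  then show ?thesis using single_layer_not_owner unfolding pullback_def by auto
qed

section \<open>Agreement of the two models\<close>

definition similar :: "(nat \<Rightarrow> 'a elem) \<Rightarrow> (nat \<Rightarrow> 'a) \<Rightarrow> nat set \<Rightarrow> bool" where
  "similar \<alpha> \<beta> X \<longleftrightarrow> (\<forall>x\<in>X. \<forall>y\<in>X. \<alpha> x = \<alpha> y \<longleftrightarrow> \<beta> x = \<beta> y) \<and>
     (\<forall>x\<in>X. small_type (\<alpha> x) = type_of (\<beta> x))"

definition agrees :: "fm \<Rightarrow> bool" where
  "agrees \<psi> \<longleftrightarrow> (\<forall>\<alpha> \<beta>. range \<alpha> \<subseteq> small_dom \<longrightarrow> range \<beta> \<subseteq> D \<longrightarrow> similar \<alpha> \<beta> (fv \<psi>) \<longrightarrow>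
     (sat small_dom small_interp \<alpha> \<psi> \<longleftrightarrow> sat D I \<beta> \<psi>))"

definition block_agrees :: "fm \<Rightarrow> nat set \<Rightarrow> bool" where
  "block_agrees \<chi> V \<longleftrightarrow> (\<forall>\<sigma> \<gamma>. range \<sigma> \<subseteq> small_dom \<longrightarrow> range \<gamma> \<subseteq> D \<longrightarrow> similar \<sigma> \<gamma> (fv \<chi>) \<longrightarrow>
     (\<forall>v\<in>V. pullback (\<sigma> ` V) (\<sigma> v) = \<gamma> v) \<longrightarrow>
     (sat small_dom small_interp \<sigma> \<chi> \<longleftrightarrow> sat D I \<gamma> \<chi>))"

lemma similar_mono: "similar \<alpha> \<beta> X \<Longrightarrow> Y \<subseteq> X \<Longrightarrow> similar \<alpha> \<beta> Y"
  unfolding similar_def by blast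

lemma card_le_width: "X \<subseteq> var_set \<Longrightarrow> card X \<le> width"
  unfolding width_def using finite_var_set by (simp add: card_mono)

lemma sat_iff_mem_small_type:
  assumes "\<psi> \<in> type_fms" "fv \<psi> \<subseteq> {x}" "c \<in> small_dom"
    and "x \<in> fv \<psi> \<Longrightarrow> small_type c = type_of (\<beta> x)"
  shows "sat D I \<beta> \<psi> \<longleftrightarrow> \<psi> \<in> small_type c"
proof (cases "x \<in> fv \<psi>")
  case True
  then show ?thesis using assms sat_iff_mem_type_of by simp
next
  case False
  then have "sat D I \<beta> \<psi> \<longleftrightarrow> sat D I (\<lambda>_. proj c) \<psi>" using assms(2) by (intro sat_cong_fv) auto
  then show ?thesis using mem_type_of[OF assms(1)] proj_realizes[OF assms(3)] by metis
qed

lemma sat_small_Exs_if_mem_type: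
  assumes q: "(x0, ys, \<chi>, V) \<in> requests" and fv\<chi>: "fv \<chi> \<subseteq> insert x0 (set ys)" and V: "V \<subseteq> fv \<chi>"
    and \<chi>: "block_agrees \<chi> V" and \<alpha>: "range \<alpha> \<subseteq> small_dom"
    and t: "Exs ys \<chi> \<in> small_type (\<alpha> x0)"
  shows "sat small_dom small_interp \<alpha> (Exs ys \<chi>)"
proof -
  let ?q = "(x0, ys, \<chi>, V)"
  let ?w = "req_witness (\<alpha> x0) ?q"
  have a: "active (\<alpha> x0) ?q" using q \<alpha> t by (auto simp: active_def)
  have x0: "x0 \<notin> set ys" using requestsD[OF q] by simp
  define \<sigma> where "\<sigma> v = (if v \<in> set ys then lift (\<alpha> x0) ?q v else \<alpha> v)" for v
  have \<sigma>_lift: "\<sigma> v = lift (\<alpha> x0) ?q v" if "v \<in> fv \<chi>" for v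
    using that fv\<chi> x0 lift_var[of "\<alpha> x0" ?q] by (auto simp: \<sigma>_def)
  have \<sigma>_dom: "range \<sigma> \<subseteq> small_dom" using \<alpha> lift_small_dom[OF a] by (auto simp: \<sigma>_def)
  have "similar \<sigma> ?w (fv \<chi>)"
    unfolding similar_def
    using \<sigma>_lift lift_eq_iff[OF a] small_type_lift[OF a] by simp
  moreover have "\<sigma> ` V = lift (\<alpha> x0) ?q ` V" using \<sigma>_lift V by (intro image_cong) auto
  then have "\<forall>v\<in>V. pullback (\<sigma> ` V) (\<sigma> v) = ?w v"
    using pullback_lift[OF a] \<sigma>_lift V by auto
  moreover have "range ?w \<subseteq> D" using req_witness_in_D[OF a] by blast
  ultimately have "sat small_dom small_interp \<sigma> \<chi> \<longleftrightarrow> sat D I ?w \<chi>"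
    using \<chi> \<sigma>_dom unfolding block_agrees_def by blast
  then have "sat small_dom small_interp \<sigma> \<chi>" using req_witness_sat[OF a] by simp
  then show ?thesis unfolding sat_Exs using \<sigma>_dom by (intro exI[of _ \<sigma>]) (auto simp: \<sigma>_def)
qed

lemma similar_assignment_exists:
  assumes \<sigma>: "range \<sigma> \<subseteq> small_dom" and X: "X \<subseteq> var_set" and V: "V \<subseteq> X"
  shows "\<exists>\<gamma>. range \<gamma> \<subseteq> D \<and> similar \<sigma> \<gamma> X \<and> (\<forall>v\<in>V. pullback (\<sigma> ` V) (\<sigma> v) = \<gamma> v)"
proof -
  have fin: "finite X" using X finite_var_set finite_subset by blast
  have S: "finite (\<sigma> ` X)" "\<sigma> ` X \<subseteq> small_dom" "card (\<sigma> ` X) \<le> width"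
    using \<sigma> fin card_le_width[OF X] card_image_le[OF fin, of \<sigma>] by auto
  have EX: "\<sigma> ` V \<subseteq> \<sigma> ` X" using V by blast
  have "finite (\<sigma> ` V)" using finite_subset[OF V fin] by simp
  moreover have "\<sigma> ` V \<subseteq> small_dom" using \<sigma> by blast
  moreover have "card (\<sigma> ` V) \<le> width" using card_mono[OF S(1) EX] S(3) by linarith
  ultimately have "faithful (pullback (\<sigma> ` V)) (\<sigma> ` V)" by (rule faithful_pullback)
  then obtain h where h: "faithful h (\<sigma> ` X)" "\<forall>c\<in>\<sigma> ` V. h c = pullback (\<sigma> ` V) c"
    using faithful_extend[OF S EX] by blast
  obtain d where d: "d \<in> D" using D_nonempty by blast
  define \<gamma> where "\<gamma> v = (if v \<in> X then h (\<sigma> v) else d)" for v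
  have h_\<sigma>: "h (\<sigma> v) \<in> D \<and> type_of (h (\<sigma> v)) = small_type (\<sigma> v)" if "v \<in> X" for v
    using h(1) that unfolding faithful_def by blast
  have "range \<gamma> \<subseteq> D" using h_\<sigma> d by (auto simp: \<gamma>_def)
  moreover have "similar \<sigma> \<gamma> X"
    unfolding similar_def
  proof (intro conjI ballI)
    fix x y assume x: "x \<in> X" and y: "y \<in> X"
    have "inj_on h (\<sigma> ` X)" using h(1) unfolding faithful_def by blast
    moreover have "\<sigma> x \<in> \<sigma> ` X" "\<sigma> y \<in> \<sigma> ` X" using x y by blast+
    ultimately have "h (\<sigma> x) = h (\<sigma> y) \<longleftrightarrow> \<sigma> x = \<sigma> y" by (rule inj_on_eq_iff)
    then show "\<sigma> x = \<sigma> y \<longleftrightarrow> \<gamma> x = \<gamma> y" using x y by (simp add: \<gamma>_def)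
  next
    fix x assume "x \<in> X"
    then show "small_type (\<sigma> x) = type_of (\<gamma> x)" using h_\<sigma> by (simp add: \<gamma>_def)
  qed
  moreover have "\<forall>v\<in>V. pullback (\<sigma> ` V) (\<sigma> v) = \<gamma> v" using h(2) V by (auto simp: \<gamma>_def)
  ultimately show ?thesis by blast
qed

lemma mem_type_if_sat_small_Exs:
  assumes q: "(x0, ys, \<chi>, V) \<in> requests" and fv\<chi>: "fv \<chi> \<subseteq> insert x0 (set ys)" and V: "V \<subseteq> fv \<chi>"
    and \<chi>: "block_agrees \<chi> V" and \<alpha>: "range \<alpha> \<subseteq> small_dom"
    and s: "sat small_dom small_interp \<alpha> (Exs ys \<chi>)"
  shows "Exs ys \<chi> \<in> small_type (\<alpha> x0)"
proof -
  let ?X = "insert x0 (set ys)"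
  obtain \<sigma> where \<sigma>: "\<forall>v. v \<notin> set ys \<longrightarrow> \<sigma> v = \<alpha> v" "\<forall>v\<in>set ys. \<sigma> v \<in> small_dom"
    "sat small_dom small_interp \<sigma> \<chi>"
    using s unfolding sat_Exs by blast
  have \<sigma>_dom: "range \<sigma> \<subseteq> small_dom"
  proof
    fix c assume "c \<in> range \<sigma>"
    then obtain v where "c = \<sigma> v" by blast
    then show "c \<in> small_dom" using \<sigma>(1,2) \<alpha> by (cases "v \<in> set ys") auto
  qed
  have X: "?X \<subseteq> var_set" using requestsD[OF q] set_req_block[OF q] by simp
  have VX: "V \<subseteq> ?X" using V fv\<chi> by blast
  obtain \<gamma> where \<gamma>: "range \<gamma> \<subseteq> D" "similar \<sigma> \<gamma> ?X"
    "\<forall>v\<in>V. pullback (\<sigma> ` V) (\<sigma> v) = \<gamma> v"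
    using similar_assignment_exists[OF \<sigma>_dom X VX] by blast
  then have "sat small_dom small_interp \<sigma> \<chi> \<longleftrightarrow> sat D I \<gamma> \<chi>"
    using \<chi> \<sigma>_dom similar_mono[OF \<gamma>(2) fv\<chi>] unfolding block_agrees_def by blast
  then have "sat D I \<gamma> (Exs ys \<chi>)" unfolding sat_Exs using \<sigma>(3) \<gamma>(1) by blast
  moreover have "fv (Exs ys \<chi>) \<subseteq> {x0}" using fv\<chi> by auto
  ultimately have "Exs ys \<chi> \<in> type_of (\<gamma> x0)"
    using sat_iff_mem_type_of request_type_fm[OF q] by simp
  moreover have "type_of (\<gamma> x0) = small_type (\<alpha> x0)"
    using \<gamma>(2) \<sigma>(1) requestsD[OF q] unfolding similar_def by simp
  ultimately show ?thesis by simp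
qed

lemma agrees_Exs_if_block_agrees:
  assumes q: "(x0, ys, \<chi>, V) \<in> requests" and fv\<chi>: "fv \<chi> \<subseteq> insert x0 (set ys)" and V: "V \<subseteq> fv \<chi>"
    and \<chi>: "block_agrees \<chi> V"
  shows "agrees (Exs ys \<chi>)"
  unfolding agrees_def
proof (intro allI impI)
  fix \<alpha> \<beta>
  assume \<alpha>: "range \<alpha> \<subseteq> small_dom" and "range \<beta> \<subseteq> D" and sim: "similar \<alpha> \<beta> (fv (Exs ys \<chi>))"
  have "sat D I \<beta> (Exs ys \<chi>) \<longleftrightarrow> Exs ys \<chi> \<in> small_type (\<alpha> x0)"
    using sim fv\<chi> \<alpha> request_type_fm[OF q]
    by (intro sat_iff_mem_small_type) (auto simp: similar_def)
  then show "sat small_dom small_interp \<alpha> (Exs ys \<chi>) \<longleftrightarrow> sat D I \<beta> (Exs ys \<chi>)"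
    using sat_small_Exs_if_mem_type[OF assms \<alpha>] mem_type_if_sat_small_Exs[OF assms \<alpha>] by blast
qed

lemma block_agrees_bool_comb:
  assumes U: "\<forall>\<theta>\<in>U. \<theta> \<in> subformulas \<phi> \<longrightarrow> agrees \<theta>" and bc: "bool_comb (U \<union> F) \<chi>"
    and \<chi>: "\<chi> \<in> subformulas \<phi>" and F: "\<forall>\<theta>\<in>F. rel_atom ar \<theta> \<and> fv \<theta> = V"
    and V': "V' = (if \<exists>\<theta>\<in>F. \<theta> \<in> subformulas \<chi> \<and> fv \<theta> \<subseteq> fv \<chi> then V else {})"
  shows "block_agrees \<chi> V'"
  unfolding block_agrees_def
proof (intro allI impI)
  fix \<sigma> \<gamma>
  assume \<sigma>: "range \<sigma> \<subseteq> small_dom" and \<gamma>: "range \<gamma> \<subseteq> D" and sim: "similar \<sigma> \<gamma> (fv \<chi>)"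
    and pb: "\<forall>v\<in>V'. pullback (\<sigma> ` V') (\<sigma> v) = \<gamma> v"
  show "sat small_dom small_interp \<sigma> \<chi> \<longleftrightarrow> sat D I \<gamma> \<chi>"
  proof (rule bool_comb_sat_cong[OF bc])
    fix \<theta> assume \<theta>: "\<theta> \<in> U \<union> F" "\<theta> \<in> subformulas \<chi>" "fv \<theta> \<subseteq> fv \<chi>"
    show "sat small_dom small_interp \<sigma> \<theta> \<longleftrightarrow> sat D I \<gamma> \<theta>"
    proof (cases "\<theta> \<in> U")
      case True
      then have "agrees \<theta>" using U \<theta>(2) \<chi> subformulas_trans by blast
      then show ?thesis using \<sigma> \<gamma> similar_mono[OF sim \<theta>(3)] unfolding agrees_def by blast
    next
      case False
      then obtain R zs where \<theta>_Rel: "\<theta> = Rel R zs" and zs: "set zs = V"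
        using F \<theta>(1) unfolding rel_atom_def by fastforce
      have "V' = V" using V' False \<theta> by auto
      then have "map (pullback (set (map \<sigma> zs))) (map \<sigma> zs) = map \<gamma> zs"
        using pb zs by (simp add: map_eq_conv)
      then show ?thesis unfolding \<theta>_Rel sat.simps small_interp_def by (rule arg_cong[of _ _ "I R"])
    qed
  qed
qed

lemma agrees_Exs:
  assumes \<psi>: "Exs ys \<chi> \<in> subformulas \<phi>" and fv\<chi>: "fv \<chi> \<subseteq> insert x (set ys)" and x: "x \<notin> set ys"
    and U: "\<forall>\<theta>\<in>U. \<theta> \<in> subformulas \<phi> \<longrightarrow> agrees \<theta>" and bc: "bool_comb (U \<union> F) \<chi>"
    and F: "\<forall>\<theta>\<in>F. rel_atom ar \<theta> \<and> fv \<theta> = V"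
  shows "agrees (Exs ys \<chi>)"
proof -
  have \<chi>: "\<chi> \<in> subformulas \<phi>" and ys: "set ys \<subseteq> vars \<phi>" using Exs_subformula[OF \<psi>] by auto
  txt \<open>A variable x outside \<phi> is not free in \<chi>, so the fresh variable can be the centre.\<close>
  define x0 where "x0 = (if x \<in> vars \<phi> then x else fresh_var)"
  define V' where "V' = (if \<exists>\<theta>\<in>F. \<theta> \<in> subformulas \<chi> \<and> fv \<theta> \<subseteq> fv \<chi> then V else {})"
  have fv\<chi>': "fv \<chi> \<subseteq> insert x0 (set ys)"
    using fv\<chi> fv_subset_vars vars_subformula[OF \<chi>] unfolding x0_def by auto
  have V': "V' \<in> atom_sets \<and> V' \<subseteq> fv \<chi>"
  proof (cases "\<exists>\<theta>\<in>F. \<theta> \<in> subformulas \<chi> \<and> fv \<theta> \<subseteq> fv \<chi>")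
    case True
    then obtain R zs where "Rel R zs \<in> subformulas \<chi>" "set zs = V" "V \<subseteq> fv \<chi>"
      using F unfolding rel_atom_def by fastforce
    then have "V \<in> atom_sets" "V \<subseteq> fv \<chi>"
      using subformulas_trans[OF \<chi>] unfolding atom_sets_def by blast+
    then show ?thesis using True unfolding V'_def by simp
  qed (auto simp: V'_def atom_sets_def)
  have "(x0, ys, \<chi>, V') \<in> requests"
    using \<psi> x ys fresh_var_notin V' unfolding requests_def x0_def var_set_def by auto
  moreover have "block_agrees \<chi> V'" using block_agrees_bool_comb[OF U bc \<chi> F V'_def] .
  ultimately show ?thesis using agrees_Exs_if_block_agrees fv\<chi>' V' by blast
qed

lemma agrees_unary_Rel:
  assumes \<psi>: "Rel R zs \<in> type_fms" and zs: "set zs = {x}"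
  shows "agrees (Rel R zs)"
  unfolding agrees_def
proof (intro allI impI)
  fix \<alpha> \<beta>
  assume \<alpha>: "range \<alpha> \<subseteq> small_dom" and "range \<beta> \<subseteq> D" and sim: "similar \<alpha> \<beta> (fv (Rel R zs))"
  have \<alpha>x: "\<alpha> x \<in> small_dom" using \<alpha> by blast
  have map_\<alpha>: "map \<alpha> zs = map (\<lambda>_. \<alpha> x) zs" using zs by (simp add: map_eq_conv)
  have "sat small_dom small_interp \<alpha> (Rel R zs) \<longleftrightarrow> I R (map (\<lambda>_. proj (\<alpha> x)) zs)"
    unfolding sat.simps small_interp_def map_\<alpha> using zs pullback_singleton by (simp add: comp_def)
  also have "\<dots> \<longleftrightarrow> sat D I (\<lambda>_. proj (\<alpha> x)) (Rel R zs)" by simp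
  also have "\<dots> \<longleftrightarrow> Rel R zs \<in> small_type (\<alpha> x)"
    using mem_type_of[OF \<psi>, of "proj (\<alpha> x)"] proj_realizes[OF \<alpha>x] by simp
  also have "\<dots> \<longleftrightarrow> sat D I \<beta> (Rel R zs)"
    using sat_iff_mem_small_type[OF \<psi> _ \<alpha>x] sim zs by (auto simp: similar_def)
  finally show "sat small_dom small_interp \<alpha> (Rel R zs) \<longleftrightarrow> sat D I \<beta> (Rel R zs)" .
qed

lemma agrees_uf1: "uf1 ar \<psi> \<Longrightarrow> \<psi> \<in> subformulas \<phi> \<Longrightarrow> agrees \<psi>"
proof (induction rule: uf1.induct)
  case (uf_unary_rel \<psi>)
  then obtain R zs x where \<psi>: "\<psi> = Rel R zs" and zs: "set zs = {x}"
    unfolding rel_atom_def by (auto simp: card_Suc_eq)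
  have "\<psi> \<in> type_fms" using uf_unary_rel.prems unfolding type_fms_def by simp
  then show ?case using agrees_unary_Rel[of R zs x] \<psi> zs by simp
next
  case (uf_neg \<psi>)
  then have "agrees \<psi>" using Neg_subformula by blast
  then show ?case unfolding agrees_def by simp
next
  case (uf_conj \<psi>1 \<psi>2)
  then have a: "agrees \<psi>1" "agrees \<psi>2" using Conj_subformula by blast+
  show ?case unfolding agrees_def
  proof (intro allI impI)
    fix \<alpha> \<beta>
    assume h: "range \<alpha> \<subseteq> small_dom" "range \<beta> \<subseteq> D" "similar \<alpha> \<beta> (fv (Conj \<psi>1 \<psi>2))"
    then have "similar \<alpha> \<beta> (fv \<psi>1)" "similar \<alpha> \<beta> (fv \<psi>2)" using similar_mono by auto
    then show "sat small_dom small_interp \<alpha> (Conj \<psi>1 \<psi>2) \<longleftrightarrow> sat D I \<beta> (Conj \<psi>1 \<psi>2)"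
      using a h(1,2) unfolding agrees_def by simp
  qed
next
  case (uf_ex xs U V F \<chi>)
  have U: "\<forall>\<theta>\<in>U. \<theta> \<in> subformulas \<phi> \<longrightarrow> agrees \<theta>" using uf_ex.IH by blast
  have F: "\<forall>\<theta>\<in>F. rel_atom ar \<theta> \<and> fv \<theta> = V"
    using \<open>uniform_set ar V F\<close> unfolding uniform_set_def by blast
  have "\<Union> (fv ` (U \<union> F)) \<subseteq> set xs" using uf_ex.IH \<open>V \<subseteq> set xs\<close> F by auto
  then have fv\<chi>: "fv \<chi> \<subseteq> set xs" using fv_bool_comb[OF \<open>bool_comb (U \<union> F) \<chi>\<close>] by blast
  obtain x ys where xs: "xs = x # ys" using \<open>xs \<noteq> []\<close> by (cases xs) auto
  show ?case
    using agrees_Exs[of ys \<chi> x U F ar V] uf_ex.prems \<open>distinct xs\<close> fv\<chi> U F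
      \<open>bool_comb (U \<union> F) \<chi>\<close>
    by (simp add: xs)
next
  case (uf_ex_all xs U V F \<chi>)
  have U: "\<forall>\<theta>\<in>U. \<theta> \<in> subformulas \<phi> \<longrightarrow> agrees \<theta>" using uf_ex_all.IH by blast
  have F: "\<forall>\<theta>\<in>F. rel_atom ar \<theta> \<and> fv \<theta> = V"
    using \<open>uniform_set ar V F\<close> unfolding uniform_set_def by blast
  have "\<Union> (fv ` (U \<union> F)) \<subseteq> set xs" using uf_ex_all.IH \<open>V \<subseteq> set xs\<close> F by auto
  then have "fv \<chi> \<subseteq> insert fresh_var (set xs)"
    using fv_bool_comb[OF \<open>bool_comb (U \<union> F) \<chi>\<close>] by blast
  moreover have "fresh_var \<notin> set xs"
    using Exs_subformula[OF uf_ex_all.prems] fresh_var_notin by blast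
  ultimately show ?case
    using agrees_Exs[OF uf_ex_all.prems _ _ U \<open>bool_comb (U \<union> F) \<chi>\<close> F] by blast
qed (auto simp: agrees_def similar_def)

lemma initial_assignment:
  assumes \<sigma>: "range \<sigma> \<subseteq> D" and X: "finite X" "X \<subseteq> var_set"
  shows "\<exists>\<alpha>. range \<alpha> \<subseteq> small_dom \<and> similar \<alpha> \<sigma> X"
proof -
  let ?xs = "sorted_list_of_set X"
  define var where "var x = (if x \<in> X then first_var \<sigma> ?xs x else fresh_var)" for x
  define \<alpha> :: "nat \<Rightarrow> 'a elem" where "\<alpha> x = (if rare (type_of (\<sigma> x)) then Inl (\<sigma> x)
    else Inr (type_of (\<sigma> x), 0, Plain (var x)))" for x
  have var: "x \<in> X \<Longrightarrow> var x \<in> X \<and> \<sigma> (var x) = \<sigma> x" for x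
    using first_var_spec[of x ?xs \<sigma>] X(1) by (simp add: var_def)
  have "var x \<in> var_set" for x
    using var X(2) by (cases "x \<in> X") (auto simp: var_def var_set_def)
  moreover have "\<sigma> x \<in> D" for x using \<sigma> by blast
  ultimately have "range \<alpha> \<subseteq> small_dom"
    by (auto simp: \<alpha>_def small_dom_Inl_iff small_dom_Inr_iff rare_elems_def Types_def labels_I)
  moreover have "\<alpha> x = \<alpha> y \<longleftrightarrow> \<sigma> x = \<sigma> y" if "x \<in> X" "y \<in> X" for x y
  proof
    assume "\<alpha> x = \<alpha> y"
    then show "\<sigma> x = \<sigma> y" using var that by (auto simp: \<alpha>_def split: if_splits) metis
  qed (use that in \<open>simp add: \<alpha>_def var_def first_var_def\<close>)
  moreover have "small_type (\<alpha> x) = type_of (\<sigma> x)" for x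
    by (simp add: \<alpha>_def small_type_def)
  ultimately show ?thesis unfolding similar_def by blast
qed

theorem small_model_sat:
  assumes "uf1 ar \<phi>" "range \<sigma> \<subseteq> D" "sat D I \<sigma> \<phi>"
  shows "\<exists>\<alpha>. range \<alpha> \<subseteq> small_dom \<and> sat small_dom small_interp \<alpha> \<phi>"
proof -
  have "finite (fv \<phi>)" using finite_subset[OF fv_subset_vars] by simp
  moreover have "fv \<phi> \<subseteq> var_set" using fv_subset_vars unfolding var_set_def by blast
  ultimately obtain \<alpha> where \<alpha>: "range \<alpha> \<subseteq> small_dom" "similar \<alpha> \<sigma> (fv \<phi>)"
    using initial_assignment[OF assms(2)] by blast
  have "agrees \<phi>" using agrees_uf1 assms(1) by simp
  then have "sat small_dom small_interp \<alpha> \<phi> \<longleftrightarrow> sat D I \<sigma> \<phi>"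
    using \<alpha> assms(2) unfolding agrees_def by blast
  then show ?thesis using \<alpha>(1) assms(3) by blast
qed

section \<open>Size of the small model\<close>

definition "N = fsize \<phi> + 1"

lemma card_var_set: "card var_set \<le> N"
  using card_insert_le_m1[of "card (vars \<phi>)" "vars \<phi>" fresh_var] card_vars_le[of \<phi>]
  unfolding var_set_def N_def by (simp add: card_insert_if)

lemma card_atom_sets: "card atom_sets \<le> N"
proof -
  have "card {set zs | R zs. Rel R zs \<in> subformulas \<phi>}
      \<le> card ((\<lambda>\<psi>. case \<psi> of Rel R zs \<Rightarrow> set zs | _ \<Rightarrow> {}) ` subformulas \<phi>)"
    by (intro card_mono rel_var_sets_subset) simp
  also have "\<dots> \<le> card (subformulas \<phi>)" by (intro card_image_le) simp
  finally have "card {set zs | R zs. Rel R zs \<in> subformulas \<phi>} \<le> card (subformulas \<phi>)" .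
  then show ?thesis
    using card_subformulas_le[of \<phi>] finite_rel_var_sets
    unfolding atom_sets_def N_def by (simp add: card_insert_if)
qed

lemma card_requests: "card requests \<le> N ^ 4"
proof -
  have "card requests = card (request_code ` requests)"
    using inj_request_code by (simp add: card_image inj_on_subset)
  also have "\<dots> \<le> card (var_set \<times> subformulas \<phi> \<times> subformulas \<phi> \<times> atom_sets)"
    using request_code_subset finite_var_set finite_atom_sets by (intro card_mono) auto
  also have "\<dots> = card var_set * card (subformulas \<phi>) * card (subformulas \<phi>) * card atom_sets"
    by (simp add: card_cartesian_product)
  also have "\<dots> \<le> N * N * N * N"
    using card_var_set card_subformulas_le[of \<phi>] card_atom_sets unfolding N_def
    by (intro mult_le_mono) auto
  finally show ?thesis by (simp add: power4_eq_xxxx mult.assoc)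
qed

lemma card_type_fms: "card type_fms \<le> 2 * N ^ 4"
proof -
  have "card type_fms \<le> card (subformulas \<phi>) + card (sep_fm ` requests)"
    unfolding type_fms_def by (rule card_Un_le)
  also have "\<dots> \<le> card (subformulas \<phi>) + card requests"
    using card_image_le[OF finite_requests] by simp
  finally have "card type_fms \<le> card (subformulas \<phi>) + card requests" .
  moreover have "card (subformulas \<phi>) \<le> N ^ 4"
    using card_subformulas_le[of \<phi>] self_le_power[of N 4] unfolding N_def by simp
  ultimately show ?thesis using card_requests by simp
qed

lemma card_Types: "card Types \<le> 2 ^ (2 * N ^ 4)"
proof -
  have "card Types \<le> card (Pow type_fms)"
    using Types_subset by (rule card_mono[rotated]) (simp add: finite_type_fms)
  also have "\<dots> \<le> 2 ^ (2 * N ^ 4)"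
    using card_type_fms by (simp add: card_Pow finite_type_fms)
  finally show ?thesis .
qed

lemma card_Types_pos: "1 \<le> card Types"
  using D_nonempty finite_Types unfolding Types_def by (simp add: Suc_leI card_gt_0_iff)

lemma rare_elems_UN: "rare_elems = (\<Union>\<tau>\<in>{\<tau> \<in> Types. rare \<tau>}. realizers \<tau>)"
  unfolding rare_elems_def realizers_def Types_def by auto

lemma finite_rare_elems: "finite rare_elems"
  unfolding rare_elems_UN using finite_Types rare_def by auto

lemma card_rare_elems: "card rare_elems \<le> card Types * N"
proof -
  have "card rare_elems \<le> (\<Sum>\<tau>\<in>{\<tau> \<in> Types. rare \<tau>}. card (realizers \<tau>))"
    unfolding rare_elems_UN by (rule card_UN_le) (simp add: finite_Types)
  also have "\<dots> \<le> (\<Sum>\<tau>\<in>{\<tau> \<in> Types. rare \<tau>}. N)"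
    using card_var_set by (intro sum_mono) (auto simp: rare_def width_def)
  also have "\<dots> \<le> card Types * N"
    by (simp add: card_mono finite_Types)
  finally show ?thesis .
qed

lemma card_labels: "card labels \<le> 4 * card Types * N ^ 6"
proof -
  let ?T = "card Types" and ?R = "card requests" and ?V = "card var_set"
  have "card labels \<le> ?R * ?V + ?T * (?R * ?V) + card rare_elems * (?R * ?V) + ?V"
    unfolding labels_def
    by (rule order_trans[OF card_Un_le add_mono] order_trans[OF card_Un_le add_mono]
        order_trans[OF card_Un_le add_mono] order_trans[OF card_image_le]
        | simp add: card_cartesian_product finite_requests finite_var_set finite_Types
            finite_rare_elems)+
  also have "\<dots> \<le> ?T * N ^ 6 + ?T * N ^ 6 + ?T * N ^ 6 + ?T * N ^ 6"
  proof -
    have RV: "?R * ?V \<le> N ^ 5"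
      using mult_le_mono[OF card_requests card_var_set] by (simp add: eval_nat_numeral)
    have N: "N ^ 5 \<le> N ^ 6" "N \<le> N ^ 6" "1 \<le> ?T"
      using card_Types_pos by (auto simp: N_def intro: power_increasing self_le_power)
    have "?R * ?V \<le> ?T * N ^ 6" using RV N le_trans[of _ "N ^ 6" "?T * N ^ 6"] by simp
    moreover have "?T * (?R * ?V) \<le> ?T * N ^ 6" using RV N by simp
    moreover have "card rare_elems * (?R * ?V) \<le> ?T * N ^ 6"
      using mult_le_mono[OF card_rare_elems RV] by (simp add: eval_nat_numeral)
    moreover have "?V \<le> ?T * N ^ 6" using card_var_set N le_trans[of _ "N ^ 6" "?T * N ^ 6"] by simp
    ultimately show ?thesis by linarith
  qed
  finally show ?thesis by simp
qed

lemma small_dom_subset: "small_dom \<subseteq> Inl ` rare_elems \<union> Inr ` (Types \<times> {..<3} \<times> labels)"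
  unfolding small_dom_def by auto

lemma finite_labels: "finite labels"
  unfolding labels_def using finite_requests finite_var_set finite_Types finite_rare_elems by simp

lemma finite_small_dom: "finite small_dom"
  using finite_rare_elems finite_Types finite_labels
  by (auto intro: finite_subset[OF small_dom_subset])

lemma card_small_dom: "card small_dom \<le> card Types * N + 12 * (card Types * card Types * N ^ 6)"
proof -
  have "card small_dom \<le> card (Inl ` rare_elems \<union> Inr ` (Types \<times> {..<3} \<times> labels) :: 'a elem set)"
    using finite_rare_elems finite_Types finite_labels by (intro card_mono small_dom_subset) auto
  also have "\<dots> \<le> card (Inl ` rare_elems :: 'a elem set) +
      card (Inr ` (Types \<times> {..<3::nat} \<times> labels) :: 'a elem set)"
    by (rule card_Un_le)
  also have "\<dots> \<le> card rare_elems + card (Types \<times> {..<3::nat} \<times> labels)"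
    by (simp add: card_image)
  also have "\<dots> \<le> card Types * N + card Types * (3 * (4 * card Types * N ^ 6))"
    using card_rare_elems card_labels by (intro add_mono) (auto simp: card_cartesian_product)
  finally show ?thesis by (simp add: algebra_simps)
qed

end

lemma exponential_bound:
  fixes T n :: nat
  assumes T: "1 \<le> T" "T \<le> 2 ^ (2 * n ^ 4)" and n: "1 \<le> n"
  shows "T * n + 12 * (T * T * n ^ 6) \<le> 2 ^ (14 * n ^ 4)"
proof -
  have "T * n \<le> T * T * n ^ 6"
    using T(1) n by (intro mult_le_mono self_le_power) simp_all
  then have "T * n + 12 * (T * T * n ^ 6) \<le> 16 * (T * T * n ^ 6)" by linarith
  also have "\<dots> \<le> 16 * (2 ^ (2 * n ^ 4) * 2 ^ (2 * n ^ 4) * (2 ^ n) ^ 6)"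
  proof -
    have "T * T \<le> 2 ^ (2 * n ^ 4) * 2 ^ (2 * n ^ 4)" using mult_le_mono[OF T(2) T(2)] .
    moreover have "n ^ 6 \<le> (2 ^ n) ^ 6" by (rule power_mono) (simp_all add: less_imp_le)
    ultimately have "T * T * n ^ 6 \<le> 2 ^ (2 * n ^ 4) * 2 ^ (2 * n ^ 4) * (2 ^ n) ^ 6"
      by (rule mult_le_mono)
    then show ?thesis by simp
  qed
  also have "\<dots> = 2 ^ (4 + 4 * n ^ 4 + 6 * n)"
  proof -
    have "(2::nat) ^ (2 * n ^ 4) * 2 ^ (2 * n ^ 4) = 2 ^ (4 * n ^ 4)"
      by (subst power_add[symmetric]) simp
    moreover have "((2::nat) ^ n) ^ 6 = 2 ^ (6 * n)"
      by (simp add: power_mult[symmetric] mult.commute)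
    ultimately show ?thesis by (simp add: power_add)
  qed
  also have "\<dots> \<le> 2 ^ (14 * n ^ 4)"
    using n self_le_power[of n 4] by (intro power_increasing) auto
  finally show ?thesis .
qed

lemma finite_model_bound:
  assumes "uf1 ar \<phi>" and "is_model (D :: 'a set) I \<sigma> \<phi>"
  shows "\<exists>(D' :: nat set) I' \<sigma>'. finite D' \<and> card D' \<le> 2 ^ (14 * (fsize \<phi> + 1) ^ 4) \<and>
    is_model D' I' \<sigma>' \<phi>"
proof -
  have D: "D \<noteq> {}" "range \<sigma> \<subseteq> D" "sat D I \<sigma> \<phi>" using assms(2) unfolding is_model_def by auto
  interpret M: small_model D I \<phi> using D(1) by unfold_locales
  obtain \<alpha> where \<alpha>: "range \<alpha> \<subseteq> M.small_dom" "sat M.small_dom M.small_interp \<alpha> \<phi>"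
    using M.small_model_sat[OF assms(1) D(2,3)] by blast
  define D' where "D' = {0..<card M.small_dom}"
  obtain g where g: "bij_betw g D' M.small_dom"
    using ex_bij_betw_nat_finite[OF M.finite_small_dom] unfolding D'_def by blast
  define \<sigma>' where "\<sigma>' x = inv_into D' g (\<alpha> x)" for x
  have \<alpha>_img: "\<alpha> x \<in> g ` D'" for x using \<alpha>(1) bij_betw_imp_surj_on[OF g] by blast
  have \<sigma>': "\<forall>x. \<sigma>' x \<in> D'" "g \<circ> \<sigma>' = \<alpha>"
    using inv_into_into[OF \<alpha>_img] f_inv_into_f[OF \<alpha>_img] by (auto simp: \<sigma>'_def fun_eq_iff)
  have "sat D' (\<lambda>R ds. M.small_interp R (map g ds)) \<sigma>' \<phi>"
    using sat_bij_betw[OF g \<sigma>'(1)] \<alpha>(2) \<sigma>'(2) by simp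
  moreover have "card D' \<le> 2 ^ (14 * (fsize \<phi> + 1) ^ 4)"
    using M.card_small_dom exponential_bound[OF M.card_Types_pos M.card_Types]
    unfolding D'_def M.N_def by simp
  ultimately show ?thesis using \<sigma>'(1) unfolding is_model_def D'_def by blast
qed

theorem mainTheorem2:
  shows "(\<forall>ar (\<phi>::fm). uf1 ar \<phi> \<longrightarrow>
            (\<exists>(D::'a set) I \<sigma>. is_model D I \<sigma> \<phi>) \<longrightarrow>
            (\<exists>(D::nat set) I \<sigma>. finite D \<and> is_model D I \<sigma> \<phi>))
       \<and> (\<exists>p::nat poly. \<forall>ar (\<phi>::fm). uf1 ar \<phi> \<longrightarrow>
            (\<exists>(D::'a set) I \<sigma>. is_model D I \<sigma> \<phi>) \<longrightarrow>
            (\<exists>(D::nat set) I \<sigma>. finite D \<and> card D \<le> 2 ^ poly p (fsize \<phi>) \<and> is_model D I \<sigma> \<phi>))"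
proof -
  let ?p = "smult (14::nat) ([:1, 1:] ^ 4)"
  have "poly ?p n = 14 * (n + 1) ^ 4" for n by (simp add: add.commute)
  then have "\<forall>ar (\<phi>::fm). uf1 ar \<phi> \<longrightarrow> (\<exists>(D::'a set) I \<sigma>. is_model D I \<sigma> \<phi>) \<longrightarrow>
    (\<exists>(D::nat set) I \<sigma>. finite D \<and> card D \<le> 2 ^ poly ?p (fsize \<phi>) \<and> is_model D I \<sigma> \<phi>)"
    using finite_model_bound by metis
  then show ?thesis by blast
qed

end
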